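(* Let $G$ be a graph with a hole cover $\mathcal C$ satisfying the NC property in $G$. If $K\subseteq V(G)$ is a clique in $\widehat G(\mathcal C)$ but not a clique in $G$, then there is a vertex $u\in K\cap\mathcal C$ such that $K\setminus\{u\}$ is a clique in $G$.
   Context: All graphs are finite and simple. A hole of $G$ is an induced cycle of length at least $4$; $\mathcal H(G)$ is the set of holes of $G$ and $\mathcal H(G,u)$ the set of holes containing $u$. A hole cover of $G$ is a nonempty $X\subseteq V(G)$ meeting every hole. A vertex $u$ satisfies the NC property in $G$ if there are no holes $H\in\mathcal H(G,u)$, $H'\in\mathcal H(G)\setminus\mathcal H(G,u)$ sharing two consecutive edges (two distinct edges with a common end vertex lying on both). A set $\mathcal C$ satisfies the NC property in $G$ if each of its vertices does and every hole contains at most one vertex of $\mathcal C$. Locally chordalizing all holes in $\mathcal H(G,u)$ by $u$ means adding all edges $uw$ with $w\ne u$ lying on some hole in $\mathcal H(G,u)$. For a hole cover $\mathcal C=\{u_1,\dots,u_k\}$ satisfying the NC property in $G$, set $G_0=G$, let $G_i$ be obtained from $G_{i-1}$ by locally chordalizing all holes in $\mathcal H(G_{i-1},u_i)$ by $u_i$, and put $\widehat G(\mathcal C)=G_k$ (this graph is chordal and independent of the ordering of $\mathcal C$). *)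

theory Defs
  imports Main
begin

definition graph :: "'a set \<Rightarrow> ('a \<Rightarrow> 'a \<Rightarrow> bool) \<Rightarrow> bool" where
  "graph V E \<longleftrightarrow> finite V \<and> (\<forall>x y. E x y \<longrightarrow> x \<in> V \<and> y \<in> V)
     \<and> (\<forall>x y. E x y \<longrightarrow> E y x) \<and> (\<forall>x. \<not> E x x)"

text \<open>A hole (induced cycle of length at least 4), identified with its vertex set H:
  the induced subgraph on H is connected and 2-regular, with at least 4 vertices.\<close>
definition hole :: "'a set \<Rightarrow> ('a \<Rightarrow> 'a \<Rightarrow> bool) \<Rightarrow> 'a set \<Rightarrow> bool" where
  "hole V E H \<longleftrightarrow> H \<subseteq> V \<and> finite H \<and> card H \<ge> 4
     \<and> (\<forall>x\<in>H. card {y\<in>H. E x y} = 2)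
     \<and> (\<forall>x\<in>H. \<forall>y\<in>H. (\<lambda>a b. E a b \<and> a \<in> H \<and> b \<in> H)\<^sup>*\<^sup>* x y)"

definition hole_cover :: "'a set \<Rightarrow> ('a \<Rightarrow> 'a \<Rightarrow> bool) \<Rightarrow> 'a set \<Rightarrow> bool" where
  "hole_cover V E X \<longleftrightarrow> X \<noteq> {} \<and> X \<subseteq> V \<and> (\<forall>H. hole V E H \<longrightarrow> H \<inter> X \<noteq> {})"

definition share_consec_edges :: "('a \<Rightarrow> 'a \<Rightarrow> bool) \<Rightarrow> 'a set \<Rightarrow> 'a set \<Rightarrow> bool" where
  "share_consec_edges E H H' \<longleftrightarrow>
     (\<exists>a b c. a \<noteq> c \<and> E a b \<and> E b c \<and> a \<in> H \<inter> H' \<and> b \<in> H \<inter> H' \<and> c \<in> H \<inter> H')"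

definition NC_vertex :: "'a set \<Rightarrow> ('a \<Rightarrow> 'a \<Rightarrow> bool) \<Rightarrow> 'a \<Rightarrow> bool" where
  "NC_vertex V E u \<longleftrightarrow> \<not> (\<exists>H H'. hole V E H \<and> u \<in> H \<and> hole V E H' \<and> u \<notin> H'
      \<and> share_consec_edges E H H')"

definition NC_set :: "'a set \<Rightarrow> ('a \<Rightarrow> 'a \<Rightarrow> bool) \<Rightarrow> 'a set \<Rightarrow> bool" where
  "NC_set V E C \<longleftrightarrow> (\<forall>u\<in>C. NC_vertex V E u) \<and> (\<forall>H. hole V E H \<longrightarrow> card (H \<inter> C) \<le> 1)"

definition local_chordalize :: "'a set \<Rightarrow> ('a \<Rightarrow> 'a \<Rightarrow> bool) \<Rightarrow> 'a \<Rightarrow> ('a \<Rightarrow> 'a \<Rightarrow> bool)" where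
  "local_chordalize V E u = (\<lambda>x y. E x y
     \<or> (x = u \<and> y \<noteq> u \<and> (\<exists>H. hole V E H \<and> u \<in> H \<and> y \<in> H))
     \<or> (y = u \<and> x \<noteq> u \<and> (\<exists>H. hole V E H \<and> u \<in> H \<and> x \<in> H)))"

text \<open>Edge relation of \<open>G-hat(C)\<close> for the ordering us of C (G_0 = G, G_i from G_(i-1)).\<close>
definition hat_edges :: "'a set \<Rightarrow> ('a \<Rightarrow> 'a \<Rightarrow> bool) \<Rightarrow> 'a list \<Rightarrow> ('a \<Rightarrow> 'a \<Rightarrow> bool)" where
  "hat_edges V E us = foldl (\<lambda>E' u. local_chordalize V E' u) E us"

definition clique :: "'a set \<Rightarrow> ('a \<Rightarrow> 'a \<Rightarrow> bool) \<Rightarrow> 'a set \<Rightarrow> bool" where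
  "clique V E K \<longleftrightarrow> K \<subseteq> V \<and> (\<forall>x\<in>K. \<forall>y\<in>K. x \<noteq> y \<longrightarrow> E x y)"

end

theory Submission imports Defs begin

text \<open>
  Write N(c) for the set of vertices on holes of G through c. The NC property of c guarantees
  that locally chordalizing by c creates no new hole and leaves no hole through c: the induced
  path left by removing c from such a hole, combined with holes of G through c, yields either a
  hole of G through c containing a vertex outside N(c), or two holes of G sharing two consecutive
  edges of which only one passes through c. Hence every edge of the chordalized graph that is
  missing in G joins some c in C to a vertex of N(c) - C (a hole meets C at most once). If two
  missing edges cw and c'w' of K had different centres, the clique K would force cc', c'w, cw' and
  ww' to be edges of G, and c together with the induced path c'ww' would form a hole of G through
  both c and c', which the NC property of C forbids.
\<close>

section \<open>Induced paths and connectivity\<close>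

definition induced_path :: "('a \<Rightarrow> 'a \<Rightarrow> bool) \<Rightarrow> 'a list \<Rightarrow> bool" where
  "induced_path E xs \<longleftrightarrow> distinct xs \<and>
     (\<forall>i<length xs. \<forall>j<length xs. E (xs!i) (xs!j) \<longleftrightarrow> (i = Suc j \<or> j = Suc i))"

definition reach_in :: "('a \<Rightarrow> 'a \<Rightarrow> bool) \<Rightarrow> 'a set \<Rightarrow> 'a \<Rightarrow> 'a \<Rightarrow> bool" where
  "reach_in E S = (\<lambda>a b. E a b \<and> a \<in> S \<and> b \<in> S)\<^sup>*\<^sup>*"

lemma induced_path_adj: "induced_path E xs \<Longrightarrow> i < length xs \<Longrightarrow> j < length xs \<Longrightarrow>
   E (xs!i) (xs!j) \<longleftrightarrow> (i = Suc j \<or> j = Suc i)"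
  unfolding induced_path_def by blast

lemma induced_path_distinct: "induced_path E xs \<Longrightarrow> distinct xs"
  unfolding induced_path_def by blast

lemma induced_path_walk: "induced_path E xs \<Longrightarrow> successively E xs"
  unfolding successively_conv_nth induced_path_def by auto

lemma graph_sym: "graph V E \<Longrightarrow> E x y \<Longrightarrow> E y x"
  unfolding graph_def by blast
lemma graph_irrefl: "graph V E \<Longrightarrow> \<not> E x x"
  unfolding graph_def by blast
lemma graph_edgeD1: "graph V E \<Longrightarrow> E x y \<Longrightarrow> x \<in> V"
  unfolding graph_def by blast
lemma graph_edgeD2: "graph V E \<Longrightarrow> E x y \<Longrightarrow> y \<in> V"
  unfolding graph_def by blast

lemma reach_in_refl: "reach_in E S x x"
  unfolding reach_in_def by simp

lemma reach_in_trans: "reach_in E S x y \<Longrightarrow> reach_in E S y z \<Longrightarrow> reach_in E S x z"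
  unfolding reach_in_def by (rule rtranclp_trans)

lemma reach_in_edge: "E x y \<Longrightarrow> x \<in> S \<Longrightarrow> y \<in> S \<Longrightarrow> reach_in E S x y"
  unfolding reach_in_def by (rule r_into_rtranclp) simp

lemma reach_in_eq_or_edge: "x = y \<or> E x y \<Longrightarrow> x \<in> S \<Longrightarrow> y \<in> S \<Longrightarrow> reach_in E S x y"
  using reach_in_edge reach_in_refl by metis

lemma reach_in_sym:
  assumes "\<And>x y. E x y \<Longrightarrow> E y x" and "reach_in E S x y" shows "reach_in E S y x"
  using assms(2) unfolding reach_in_def
proof (induction rule: rtranclp_induct)
  case base then show ?case by simp
next
  case (step y z)
  then have "(\<lambda>a b. E a b \<and> a \<in> S \<and> b \<in> S) z y" using assms(1) by blast
  then show ?case using step(3) by (rule converse_rtranclp_into_rtranclp)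
qed

lemma graph_reach_in_sym: "graph V E \<Longrightarrow> reach_in E S x y \<Longrightarrow> reach_in E S y x"
  using reach_in_sym[of E S x y] graph_sym[of V E] by blast

lemma reach_in_mono: "S \<subseteq> S' \<Longrightarrow> reach_in E S x y \<Longrightarrow> reach_in E S' x y"
  unfolding reach_in_def by (erule rtranclp_mono[THEN predicate2D, rotated]) blast

lemma reach_in_mem: "reach_in E S x y \<Longrightarrow> x \<in> S \<Longrightarrow> y \<in> S"
  unfolding reach_in_def by (induction rule: rtranclp_induct) auto

lemma reach_in_walk:
  assumes "reach_in E S x y" "x \<in> S"
  shows "\<exists>xs. successively E xs \<and> xs \<noteq> [] \<and> hd xs = x \<and> last xs = y \<and> set xs \<subseteq> S"
  using assms unfolding reach_in_def
proof (induction rule: rtranclp_induct)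
  case base then show ?case by (intro exI[of _ "[x]"]) simp
next
  case (step y z)
  then obtain xs where xs: "successively E xs" "xs \<noteq> []" "hd xs = x" "last xs = y" "set xs \<subseteq> S"
    by blast
  show ?case
    by (rule exI[of _ "xs @ [z]"]) (use xs step(2) in \<open>auto simp: successively_append_iff\<close>)
qed

lemma walk_reach_in:
  assumes "successively E xs" "xs \<noteq> []" "set xs \<subseteq> S"
  shows "reach_in E S (hd xs) (last xs)"
  using assms
proof (induction xs rule: rev_induct)
  case Nil then show ?case by simp
next
  case (snoc z xs)
  show ?case
  proof (cases "xs = []")
    case True then show ?thesis by (simp add: reach_in_refl)
  next
    case False
    have w: "successively E xs" "E (last xs) z"
      using snoc(2) False by (auto simp: successively_append_iff)
    have "reach_in E S (hd xs) (last xs)" using snoc False w by auto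
    moreover have "reach_in E S (last xs) z"
      using w snoc(4) False by (intro reach_in_edge) auto
    ultimately show ?thesis using False by (auto intro: reach_in_trans)
  qed
qed

lemma walk_reach_in_nth:
  assumes "successively E ys" "i \<le> j" "j < length ys" "\<And>k. i \<le> k \<Longrightarrow> k \<le> j \<Longrightarrow> ys!k \<in> S"
  shows "reach_in E S (ys!i) (ys!j)"
  using assms(2,3,4)
proof (induction j)
  case 0 then show ?case by (simp add: reach_in_refl)
next
  case (Suc j)
  show ?case
  proof (cases "i = Suc j")
    case True then show ?thesis by (simp add: reach_in_refl)
  next
    case False
    then have "reach_in E S (ys!i) (ys!j)" using Suc by auto
    moreover have "reach_in E S (ys!j) (ys!Suc j)"
      using Suc False assms(1) by (intro reach_in_edge) (auto simp: successively_nth)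
    ultimately show ?thesis by (rule reach_in_trans)
  qed
qed

lemma successively_shortcut:
  assumes "successively E xs" "i < j" "j < length xs" "E (xs!i) (xs!j)"
  shows "successively E (take (Suc i) xs @ drop j xs)"
  unfolding successively_append_iff
proof (intro conjI)
  show "successively E (take (Suc i) xs)" "successively E (drop j xs)"
    using assms(1) unfolding successively_conv_nth by auto
  have "last (take (Suc i) xs) = xs!i" "hd (drop j xs) = xs!j"
    using assms(2,3) by (simp_all add: take_Suc_conv_app_nth hd_drop_conv_nth)
  then show "take (Suc i) xs = [] \<or> drop j xs = [] \<or> E (last (take (Suc i) xs)) (hd (drop j xs))"
    using assms(4) by simp
qed

lemma walk_shorten:
  assumes sym: "\<And>x y. E x y \<Longrightarrow> E y x" and irr: "\<And>x. \<not> E x x"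
    and walk: "successively E xs" and ne: "xs \<noteq> []" and not_induced: "\<not> induced_path E xs"
  obtains xs' where "successively E xs'" "xs' \<noteq> []" "length xs' < length xs"
    "hd xs' = hd xs" "last xs' = last xs" "set xs' \<subseteq> set xs"
proof -
  note result = that
  have shortcut: thesis if "Suc i < j" "j < length xs" "E (xs!i) (xs!j)" for i j
  proof (rule result)
    let ?xs' = "take (Suc i) xs @ drop j xs"
    show "successively E ?xs'" using successively_shortcut[OF walk] \<open>Suc i < j\<close> that(2,3) by simp
    show "?xs' \<noteq> []" "length ?xs' < length xs" "last ?xs' = last xs" using that(1,2) by auto
    show "hd ?xs' = hd xs" using ne by (cases xs) auto
    show "set ?xs' \<subseteq> set xs" using set_take_subset set_drop_subset by fastforce
  qed
  show thesis
  proof (cases "distinct xs")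
    case False
    then obtain i j where ij: "i < j" "j < length xs" "xs!i = xs!j"
      by (metis distinct_conv_nth linorder_neqE_nat)
    show thesis
    proof (cases i)
      case 0
      show thesis
      proof (rule that[of "drop j xs"])
        show "successively E (drop j xs)" using walk unfolding successively_conv_nth by auto
        show "hd (drop j xs) = hd xs" using ij 0 ne by (simp add: hd_drop_conv_nth hd_conv_nth)
      qed (use ij in \<open>auto dest: in_set_dropD\<close>)
    next
      case (Suc i')
      then show thesis
        using shortcut[of i' j] ij successively_nth[OF walk, of i'] by simp
    qed
  next
    case True
    then obtain i j where "i < length xs" "j < length xs" "E (xs!i) (xs!j)" "i \<noteq> Suc j" "j \<noteq> Suc i"
      using not_induced walk sym unfolding induced_path_def successively_conv_nth
      by (metis Suc_lessD)
    moreover have "i \<noteq> j" using \<open>E (xs!i) (xs!j)\<close> irr by auto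
    ultimately show thesis
      using shortcut sym by (metis Suc_lessI linorder_neqE_nat)
  qed
qed

lemma walk_induced_subpath:
  assumes sym: "\<And>x y. E x y \<Longrightarrow> E y x" and irr: "\<And>x. \<not> E x x"
  shows "successively E xs \<Longrightarrow> xs \<noteq> [] \<Longrightarrow>
    \<exists>ys. induced_path E ys \<and> ys \<noteq> [] \<and> hd ys = hd xs \<and> last ys = last xs \<and> set ys \<subseteq> set xs"
proof (induction "length xs" arbitrary: xs rule: less_induct)
  case less
  show ?case
  proof (cases "induced_path E xs")
    case True then show ?thesis using less by blast
  next
    case False
    obtain xs' where "successively E xs'" "xs' \<noteq> []" "length xs' < length xs"
      "hd xs' = hd xs" "last xs' = last xs" "set xs' \<subseteq> set xs"
      using walk_shorten[OF sym irr less(2,3) False] by blast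
    with less(1) show ?thesis by fastforce
  qed
qed

lemma reach_in_induced_path:
  assumes sym: "\<And>x y. E x y \<Longrightarrow> E y x" and irr: "\<And>x. \<not> E x x"
    and "reach_in E S x y" "x \<in> S"
  shows "\<exists>ys. induced_path E ys \<and> ys \<noteq> [] \<and> hd ys = x \<and> last ys = y \<and> set ys \<subseteq> S"
proof -
  obtain xs where xs: "successively E xs" "xs \<noteq> []" "hd xs = x" "last xs = y" "set xs \<subseteq> S"
    using reach_in_walk[OF assms(3,4)] by blast
  from walk_induced_subpath[OF sym irr xs(1,2)] xs show ?thesis by blast
qed

section \<open>Holes\<close>

lemma hole_iff_reach_in:
  "hole V E H \<longleftrightarrow> H \<subseteq> V \<and> finite H \<and> card H \<ge> 4
     \<and> (\<forall>x\<in>H. card {y\<in>H. E x y} = 2) \<and> (\<forall>x\<in>H. \<forall>y\<in>H. reach_in E H x y)"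
  unfolding hole_def reach_in_def by simp

lemma induced_path_closing_degree:
  assumes g: "graph V E" and ip: "induced_path E zs" and len: "3 \<le> length zs"
    and cn: "c \<notin> set zs"
    and ec: "\<And>j. j < length zs \<Longrightarrow> E c (zs!j) \<longleftrightarrow> (j = 0 \<or> j = length zs - 1)"
    and i: "i < length zs"
  shows "card {y \<in> insert c (set zs). E (zs!i) y} = 2"
proof -
  define lo where "lo = (if i = 0 then c else zs!(i - 1))"
  define hi where "hi = (if i = length zs - 1 then c else zs!(i + 1))"
  have ez: "E (zs!i) (zs!j) \<longleftrightarrow> (i = Suc j \<or> j = Suc i)" if "j < length zs" for j
    using induced_path_adj[OF ip i that] .
  have ezc: "E (zs!i) c \<longleftrightarrow> (i = 0 \<or> i = length zs - 1)" using ec[OF i] graph_sym[OF g] by blast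
  have zc: "zs!j \<noteq> c" if "j < length zs" for j using cn that by auto
  have zz: "zs!j = zs!k \<longleftrightarrow> j = k" if "j < length zs" "k < length zs" for j k
    using induced_path_distinct[OF ip] that by (simp add: nth_eq_iff_index_eq)
  have "{y \<in> insert c (set zs). E (zs!i) y} = {lo, hi}"
  proof (intro set_eqI iffI)
    fix y assume y: "y \<in> {y \<in> insert c (set zs). E (zs!i) y}"
    show "y \<in> {lo, hi}"
    proof (cases "y = c")
      case True then show ?thesis using y ezc by (auto simp: lo_def hi_def)
    next
      case False
      then obtain j where "j < length zs" "y = zs!j" using y by (auto simp: in_set_conv_nth)
      then have "j = i - 1 \<and> 0 < i \<or> j = i + 1 \<and> i \<noteq> length zs - 1" using y ez[of j] by auto
      then show ?thesis using \<open>y = zs!j\<close> by (auto simp: lo_def hi_def)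
    qed
  next
    fix y assume "y \<in> {lo, hi}"
    then show "y \<in> {y \<in> insert c (set zs). E (zs!i) y}"
      using ez[of "i - 1"] ez[of "i + 1"] ezc i by (auto simp: lo_def hi_def split: if_splits)
  qed
  moreover have "lo \<noteq> hi"
  proof (cases "i = 0")
    case True
    then show ?thesis using zc[of 1] len by (auto simp: lo_def hi_def)
  next
    case False
    have "i - 1 < length zs" "i \<noteq> length zs - 1 \<Longrightarrow> i + 1 < length zs" using i by linarith+
    then show ?thesis using False zc[of "i - 1"] zz[of "i - 1" "i + 1"] by (auto simp: lo_def hi_def)
  qed
  ultimately show ?thesis by simp
qed

lemma hole_of_induced_path:
  assumes g: "graph V E" and ip: "induced_path E zs" and len: "3 \<le> length zs" and sV: "set zs \<subseteq> V"
    and cV: "c \<in> V" and cn: "c \<notin> set zs" and e1: "E c (hd zs)" and e2: "E c (last zs)"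
    and int: "\<And>i. 0 < i \<Longrightarrow> i < length zs - 1 \<Longrightarrow> \<not> E c (zs!i)"
  shows "hole V E (insert c (set zs))"
proof -
  define n where "n = length zs"
  define H where "H = insert c (set zs)"
  have dist: "distinct zs" using ip induced_path_distinct by blast
  have nn: "zs \<noteq> []" using len by auto
  have n3: "0 < n" "0 \<noteq> n - 1" "n - 1 < n" using len n_def by linarith+
  have hd0: "hd zs = zs!0" using nn by (simp add: hd_conv_nth)
  have lastn: "last zs = zs!(n-1)" using nn by (simp add: last_conv_nth n_def)
  have ec: "E c (zs!i) \<longleftrightarrow> (i = 0 \<or> i = n - 1)" if "i < n" for i
  proof (cases "i = 0 \<or> i = n - 1")
    case True then show ?thesis using e1 e2 hd0 lastn by auto
  next
    case False
    then have "0 < i" "i < length zs - 1" using that n_def by auto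
    then show ?thesis using int[of i] False by auto
  qed
  have card: "card H = Suc n"
    using cn dist by (simp add: H_def n_def distinct_card)
  have "{y\<in>H. E c y} = {zs!0, zs!(n-1)}"
  proof (intro set_eqI iffI)
    fix y assume "y \<in> {y\<in>H. E c y}"
    then have "y \<in> set zs" "E c y" using graph_irrefl[OF g] by (auto simp: H_def)
    then obtain i where "i < n" "y = zs!i" by (auto simp: in_set_conv_nth n_def)
    then show "y \<in> {zs!0, zs!(n-1)}" using ec \<open>E c y\<close> by auto
  next
    fix y assume "y \<in> {zs!0, zs!(n-1)}"
    moreover have "0 < length zs" "n - 1 < length zs" using len n_def by auto
    then have "zs!0 \<in> set zs" "zs!(n-1) \<in> set zs" by (meson nth_mem)+
    moreover have "E c (zs!0)" "E c (zs!(n-1))" using ec[of 0] ec[of "n-1"] len n_def nn by auto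
    ultimately show "y \<in> {y\<in>H. E c y}" by (auto simp: H_def)
  qed
  moreover have "zs!0 \<noteq> zs!(n-1)" using dist n3 n_def by (simp add: nth_eq_iff_index_eq)
  ultimately have deg_c: "card {y\<in>H. E c y} = 2" by simp
  have deg_z: "card {y\<in>H. E (zs!i) y} = 2" if "i < n" for i
    using induced_path_closing_degree[OF g ip len cn, of i] ec that unfolding H_def n_def by blast
  have reach: "reach_in E H c y" if yH: "y \<in> H" for y
  proof (cases "y = c")
    case True then show ?thesis by (simp add: reach_in_refl)
  next
    case False
    then obtain i where i: "i < n" "y = zs!i" using yH by (auto simp: H_def in_set_conv_nth n_def)
    have "reach_in E H c (zs!0)" using e1 hd0 by (intro reach_in_edge) (auto simp: H_def nn)
    moreover have "reach_in E H (zs!0) (zs!i)"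
      using induced_path_walk[OF ip] i n_def by (intro walk_reach_in_nth) (auto simp: H_def)
    ultimately show ?thesis using i reach_in_trans by metis
  qed
  show ?thesis unfolding hole_iff_reach_in H_def[symmetric]
  proof (intro conjI ballI)
    show "H \<subseteq> V" using sV cV by (auto simp: H_def)
    show "finite H" by (simp add: H_def)
    show "4 \<le> card H" using card len n_def by simp
    fix x assume x: "x \<in> H"
    show "card {y\<in>H. E x y} = 2"
    proof (cases "x = c")
      case True then show ?thesis using deg_c by simp
    next
      case False
      then obtain i where "i < n" "x = zs!i" using x by (auto simp: H_def in_set_conv_nth n_def)
      then show ?thesis using deg_z by simp
    qed
    fix y assume y: "y \<in> H"
    show "reach_in E H x y"
      using reach[OF x] reach[OF y] reach_in_sym graph_sym[OF g] reach_in_trans by metis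
  qed
qed

lemma hole_closed_subset_eq:
  assumes h: "hole V E H" and "S \<subseteq> H" "x0 \<in> S"
    and cl: "\<And>x y. x \<in> S \<Longrightarrow> y \<in> H \<Longrightarrow> E x y \<Longrightarrow> y \<in> S"
  shows "S = H"
proof
  show "H \<subseteq> S"
  proof
    fix y assume y: "y \<in> H"
    have "reach_in E H x0 y" using h y assms(2,3) unfolding hole_iff_reach_in by blast
    then show "y \<in> S" unfolding reach_in_def
      by (induction rule: rtranclp_induct) (use assms(3) cl in auto)
  qed
qed fact

lemma hole_degree: "hole V E H \<Longrightarrow> x \<in> H \<Longrightarrow> card {y\<in>H. E x y} = 2"
  unfolding hole_iff_reach_in by blast

lemma hole_subset_eq:
  assumes h1: "hole V E H1" and h2: "hole V E H2" and sub: "H1 \<subseteq> H2"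
  shows "H1 = H2"
proof -
  have "H1 \<noteq> {}" using h1 unfolding hole_iff_reach_in by auto
  then obtain x0 where "x0 \<in> H1" by blast
  show ?thesis
  proof (rule hole_closed_subset_eq[OF h2 sub \<open>x0 \<in> H1\<close>])
    fix x y assume x: "x \<in> H1" and y: "y \<in> H2" and e: "E x y"
    have "{y\<in>H1. E x y} \<subseteq> {y\<in>H2. E x y}" using sub by auto
    moreover have "finite {y\<in>H2. E x y}" using h2 unfolding hole_iff_reach_in by auto
    moreover have "card {y\<in>H1. E x y} = card {y\<in>H2. E x y}"
      using hole_degree[OF h1 x] hole_degree[OF h2] x sub by auto
    ultimately have "{y\<in>H1. E x y} = {y\<in>H2. E x y}" by (meson card_subset_eq)
    then show "y \<in> H1" using y e by blast
  qed
qed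

lemma hole_through_apex:
  assumes g: "graph V E" and ca: "E c a" and cb: "E c b" and ab: "a \<noteq> b" "\<not> E a b"
    and SV: "S \<subseteq> V" and aS: "a \<in> S" and bS: "b \<in> S" and cS: "c \<notin> S"
    and nc: "\<And>z. z \<in> S \<Longrightarrow> z \<noteq> a \<Longrightarrow> z \<noteq> b \<Longrightarrow> \<not> E c z"
    and r: "reach_in E S a b"
  shows "\<exists>zs. induced_path E zs \<and> zs \<noteq> [] \<and> hd zs = a \<and> last zs = b \<and> set zs \<subseteq> S \<and> hole V E (insert c (set zs))"
proof -
  obtain zs where zs: "induced_path E zs" "zs \<noteq> []" "hd zs = a" "last zs = b" "set zs \<subseteq> S"
    using reach_in_induced_path[of E S a b] graph_sym[OF g] graph_irrefl[OF g] r aS by blast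
  have dist: "distinct zs" using zs(1) induced_path_distinct by blast
  have h0: "zs!0 = a" using zs by (simp add: hd_conv_nth)
  have hl: "zs!(length zs - 1) = b" using zs by (simp add: last_conv_nth)
  have l1: "length zs \<noteq> 1" using zs ab h0 hl by auto
  have l2: "length zs \<noteq> 2"
  proof
    assume "length zs = 2"
    then have "E (zs!0) (zs!1)" using induced_path_adj[OF zs(1), of 0 1] by simp
    then show False using h0 hl \<open>length zs = 2\<close> ab by simp
  qed
  have "length zs \<noteq> 0" using zs(2) by simp
  then have len: "3 \<le> length zs" using l1 l2 by presburger
  have "hole V E (insert c (set zs))"
  proof (rule hole_of_induced_path[OF g zs(1) len])
    show "set zs \<subseteq> V" using zs SV by auto
    show "c \<in> V" using graph_edgeD1[OF g ca] .
    show "c \<notin> set zs" using zs cS by auto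
    show "E c (hd zs)" "E c (last zs)" using zs ca cb by auto
    fix i assume i: "0 < i" "i < length zs - 1"
    have il: "i < length zs" "0 < length zs" "length zs - 1 < length zs" "i \<noteq> length zs - 1"
      using i by linarith+
    have "zs!i \<noteq> a" using dist il i h0 by (metis nth_eq_iff_index_eq less_not_refl2)
    moreover have "zs!i \<noteq> b" using dist il i hl by (metis nth_eq_iff_index_eq)
    moreover have "zs!i \<in> S" using zs il nth_mem by blast
    ultimately show "\<not> E c (zs!i)" using nc by blast
  qed
  then show ?thesis using zs by blast
qed

lemma even_degree_sum:
  assumes sym: "\<And>x y. E x y \<Longrightarrow> E y x" and irr: "\<And>x. \<not> E x x"
  shows "finite S \<Longrightarrow> even (\<Sum>x\<in>S. card {y\<in>S. E x y})"
proof (induction S rule: finite_induct)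
  case empty then show ?case by simp
next
  case (insert z S)
  have c1: "card {y\<in>insert z S. E z y} = card {y\<in>S. E z y}"
  proof -
    have "{y\<in>insert z S. E z y} = {y\<in>S. E z y}" using irr by auto
    then show ?thesis by simp
  qed
  have c2: "card {y\<in>insert z S. E x y} = card {y\<in>S. E x y} + (if E x z then 1 else 0)"
    if "x \<in> S" for x
  proof (cases "E x z")
    case True
    then have "{y\<in>insert z S. E x y} = insert z {y\<in>S. E x y}" by auto
    then show ?thesis using insert True by simp
  next
    case False
    then have "{y\<in>insert z S. E x y} = {y\<in>S. E x y}" by auto
    then show ?thesis using False by simp
  qed
  have s3: "(\<Sum>x\<in>S. (if E x z then 1 else 0::nat)) = card {y\<in>S. E z y}"
  proof -
    have "(\<Sum>x\<in>S. (if E x z then 1 else 0::nat)) = card {x\<in>S. E x z}"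
      using insert(1) by (simp add: sum.If_cases Int_def conj_commute)
    also have "{x\<in>S. E x z} = {y\<in>S. E z y}" using sym by blast
    finally show ?thesis .
  qed
  have "(\<Sum>x\<in>insert z S. card {y\<in>insert z S. E x y})
      = card {y\<in>S. E z y} + (\<Sum>x\<in>S. card {y\<in>insert z S. E x y})"
    using insert c1 by simp
  also have "(\<Sum>x\<in>S. card {y\<in>insert z S. E x y})
      = (\<Sum>x\<in>S. card {y\<in>S. E x y}) + (\<Sum>x\<in>S. (if E x z then 1 else 0::nat))"
    using c2 by (simp add: sum.distrib)
  finally have "(\<Sum>x\<in>insert z S. card {y\<in>insert z S. E x y})
      = 2 * card {y\<in>S. E z y} + (\<Sum>x\<in>S. card {y\<in>S. E x y})" using s3 by simp
  then show ?case using insert(3) by simp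
qed

text \<open>Otherwise the component of a in \<open>H - {u}\<close>, together with u, would span a subgraph in which
  u is the only vertex of odd degree.\<close>

lemma hole_minus_vertex_reach_in:
  assumes g: "graph V E" and h: "hole V E H" and u: "u \<in> H"
    and ab: "{y\<in>H. E u y} = {a, b}" "a \<noteq> b"
  shows "reach_in E (H - {u}) a b"
proof (rule ccontr)
  assume nr: "\<not> reach_in E (H - {u}) a b"
  have fin: "finite H" using h unfolding hole_iff_reach_in by blast
  have aH: "a \<in> H" "E u a" using ab by blast+
  have bH: "b \<in> H" "E u b" using ab by blast+
  have au: "a \<noteq> u" using aH graph_irrefl[OF g] by auto
  define A where "A = {x. reach_in E (H - {u}) a x}"
  have aA: "a \<in> A" by (simp add: A_def reach_in_refl)
  have AH: "A \<subseteq> H - {u}"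
  proof
    fix x assume "x \<in> A"
    then have "reach_in E (H - {u}) a x" by (simp add: A_def)
    moreover have "a \<in> H - {u}" using aH au by simp
    ultimately show "x \<in> H - {u}" using reach_in_mem[of E "H - {u}" a x] by simp
  qed
  have uA: "u \<notin> A" using AH by auto
  have bA: "b \<notin> A" using nr by (simp add: A_def)
  define S where "S = insert u A"
  have finS: "finite S" using AH fin S_def finite_subset by auto
  have degA: "{y\<in>S. E x y} = {y\<in>H. E x y}" if x: "x \<in> A" for x
  proof
    show "{y\<in>S. E x y} \<subseteq> {y\<in>H. E x y}" using AH u by (auto simp: S_def)
    show "{y\<in>H. E x y} \<subseteq> {y\<in>S. E x y}"
    proof
      fix y assume y: "y \<in> {y\<in>H. E x y}"
      show "y \<in> {y\<in>S. E x y}"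
      proof (cases "y = u")
        case False
        have "reach_in E (H - {u}) x y" using y False x AH by (intro reach_in_edge) auto
        moreover have "reach_in E (H - {u}) a x" using x by (simp add: A_def)
        ultimately have "reach_in E (H - {u}) a y" using reach_in_trans[of E "H - {u}" a x y] by simp
        then have "y \<in> A" unfolding A_def by simp
        then show ?thesis using y by (simp add: S_def)
      qed (use y in \<open>simp add: S_def\<close>)
    qed
  qed
  have degu: "{y\<in>S. E u y} = {a}"
  proof
    show "{y\<in>S. E u y} \<subseteq> {a}"
    proof
      fix y assume y: "y \<in> {y\<in>S. E u y}"
      then have "y \<in> H" using AH u by (auto simp: S_def)
      then have "y \<in> {a, b}" using y ab(1) by blast
      then show "y \<in> {a}" using y bA graph_irrefl[OF g] by (auto simp: S_def)
    qed
    show "{a} \<subseteq> {y\<in>S. E u y}" using aA aH by (simp add: S_def)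
  qed
  have "(\<Sum>x\<in>S. card {y\<in>S. E x y}) = card {y\<in>S. E u y} + (\<Sum>x\<in>A. card {y\<in>S. E x y})"
    using finS uA by (simp add: S_def)
  also have "\<dots> = 1 + (\<Sum>x\<in>A. 2)"
  proof -
    have "card {y\<in>S. E x y} = 2" if "x \<in> A" for x
      using degA[OF that] hole_degree[OF h, of x] AH that by auto
    then have "(\<Sum>x\<in>A. card {y\<in>S. E x y}) = (\<Sum>x\<in>A. 2)" by (rule sum.cong[OF refl])
    then show ?thesis using degu by simp
  qed
  finally have "(\<Sum>x\<in>S. card {y\<in>S. E x y}) = 1 + 2 * card A" by simp
  moreover have "even (\<Sum>x\<in>S. card {y\<in>S. E x y})"
    using even_degree_sum[of E S] graph_sym[OF g] graph_irrefl[OF g] finS by blast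
  ultimately show False by simp
qed

definition hole_path :: "'a set \<Rightarrow> ('a \<Rightarrow> 'a \<Rightarrow> bool) \<Rightarrow> 'a \<Rightarrow> 'a list \<Rightarrow> bool" where
  "hole_path V E u ys \<longleftrightarrow> induced_path E ys \<and> 3 \<le> length ys \<and> set ys \<subseteq> V \<and> u \<notin> set ys
     \<and> E u (hd ys) \<and> E u (last ys) \<and> (\<forall>i. 0 < i \<and> i < length ys - 1 \<longrightarrow> \<not> E u (ys!i))
     \<and> hole V E (insert u (set ys))"

lemma hole_neighbours_nonadjacent:
  assumes g: "graph V E" and h: "hole V E H" and u: "u \<in> H"
    and ab: "{y\<in>H. E u y} = {a, b}" "a \<noteq> b"
  shows "\<not> E a b"
proof
  assume eab: "E a b"
  have aH: "a \<in> H" "E u a" using ab by blast+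
  have bH: "b \<in> H" "E u b" using ab by blast+
  have au: "a \<noteq> u" "b \<noteq> u" using aH bH graph_irrefl[OF g] by auto
  have nbr: "{y\<in>H. E x y} = {p, q}" if "x \<in> H" "p \<in> H" "q \<in> H" "E x p" "E x q" "p \<noteq> q" for x p q
  proof -
    have "{p, q} \<subseteq> {y\<in>H. E x y}" using that by auto
    moreover have "finite {y\<in>H. E x y}" using h unfolding hole_iff_reach_in by auto
    moreover have "card {p, q} = card {y\<in>H. E x y}" using hole_degree[OF h that(1)] that(6) by simp
    ultimately show ?thesis by (metis card_subset_eq)
  qed
  have "{u, a, b} = H"
  proof (rule hole_closed_subset_eq[OF h])
    show "{u, a, b} \<subseteq> H" using u aH bH by auto
    show "u \<in> {u, a, b}" by simp
    fix x y assume x: "x \<in> {u, a, b}" and y: "y \<in> H" and e: "E x y"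
    have "x = u \<or> x = a \<or> x = b" using x by simp
    then show "y \<in> {u, a, b}"
    proof (elim disjE)
      assume "x = u" then show ?thesis using ab y e by auto
    next
      assume xa: "x = a"
      have "{y\<in>H. E a y} = {u, b}"
        using nbr[of a u b] aH bH u eab au graph_sym[OF g, OF aH(2)] by auto
      then show ?thesis using xa y e by auto
    next
      assume xb: "x = b"
      have "{y\<in>H. E b y} = {u, a}"
        using nbr[of b u a] aH bH u eab au graph_sym[OF g] by auto
      then show ?thesis using xb y e by auto
    qed
  qed
  moreover have "card {u, a, b} \<le> 3" by (auto simp: card_insert_if)
  ultimately have "card H \<le> 3" by simp
  then show False using h unfolding hole_iff_reach_in by simp
qed

lemma hole_path_exists:
  assumes g: "graph V E" and h: "hole V E H" and u: "u \<in> H"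
  shows "\<exists>ys. hole_path V E u ys \<and> set ys = H - {u}"
proof -
  have "card {y\<in>H. E u y} = 2" using hole_degree[OF h u] .
  then obtain a b where ab: "{y\<in>H. E u y} = {a, b}" "a \<noteq> b" by (auto simp: card_2_iff)
  have aH: "a \<in> H" "E u a" using ab by blast+
  have bH: "b \<in> H" "E u b" using ab by blast+
  have au: "a \<noteq> u" "b \<noteq> u" using aH bH graph_irrefl[OF g] by auto
  have HV: "H \<subseteq> V" using h unfolding hole_iff_reach_in by blast
  have r: "reach_in E (H - {u}) a b" using hole_minus_vertex_reach_in[OF g h u ab] .
  obtain ys where ys: "induced_path E ys" "ys \<noteq> []" "hd ys = a" "last ys = b" "set ys \<subseteq> H - {u}"
    using reach_in_induced_path[of E "H - {u}" a b] graph_sym[OF g] graph_irrefl[OF g] r aH au by blast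
  have dist: "distinct ys" using ys(1) induced_path_distinct by blast
  have h0: "ys!0 = a" using ys by (simp add: hd_conv_nth)
  have hl: "ys!(length ys - 1) = b" using ys by (simp add: last_conv_nth)
  have l1: "length ys \<noteq> 1" using ys ab h0 hl by auto
  have l2: "length ys \<noteq> 2"
  proof
    assume l: "length ys = 2"
    then have "E (ys!0) (ys!1)" using induced_path_adj[OF ys(1), of 0 1] by simp
    then have "E a b" using h0 hl l by simp
    then show False using hole_neighbours_nonadjacent[OF g h u ab] by simp
  qed
  have "length ys \<noteq> 0" using ys(2) by simp
  then have len: "3 \<le> length ys" using l1 l2 by presburger
  have int: "\<not> E u (ys!i)" if i: "0 < i" "i < length ys - 1" for i
  proof
    assume e: "E u (ys!i)"
    have il: "i < length ys" "0 < length ys" "length ys - 1 < length ys" "i \<noteq> length ys - 1"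
      using i by linarith+
    have "ys!i \<noteq> a" using dist il i h0 by (metis nth_eq_iff_index_eq less_not_refl2)
    moreover have "ys!i \<noteq> b" using dist il i hl by (metis nth_eq_iff_index_eq)
    moreover have "ys!i \<in> H" using ys il nth_mem by blast
    ultimately show False using e ab by blast
  qed
  have sV: "set ys \<subseteq> V" using ys HV by auto
  have un: "u \<notin> set ys" using ys by auto
  have hh: "hole V E (insert u (set ys))"
    using hole_of_induced_path[OF g ys(1) len sV _ un] HV u aH bH ys int by auto
  have "insert u (set ys) = H" using hole_subset_eq[OF hh h] u ys by auto
  then have st: "set ys = H - {u}" using un by auto
  have "hole_path V E u ys" unfolding hole_path_def using ys len sV un aH bH int hh by auto
  then show ?thesis using st by blast
qed

lemma induced_path_rev: "induced_path E xs \<Longrightarrow> induced_path E (rev xs)"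
  unfolding induced_path_def by (auto simp: rev_nth)

lemma hole_path_rev:
  assumes "hole_path V E u ys" shows "hole_path V E u (rev ys)"
proof -
  have ip: "induced_path E ys" and len: "3 \<le> length ys" and int: "\<And>i. 0 < i \<Longrightarrow> i < length ys - 1 \<Longrightarrow> \<not> E u (ys!i)"
    using assms unfolding hole_path_def by auto
  have "\<not> E u (rev ys ! i)" if "0 < i" "i < length ys - 1" for i
  proof -
    have "rev ys ! i = ys ! (length ys - Suc i)" using that by (simp add: rev_nth)
    moreover have "0 < length ys - Suc i" "length ys - Suc i < length ys - 1" using that by linarith+
    ultimately show ?thesis using int by simp
  qed
  moreover have "ys \<noteq> []" using len by auto
  ultimately show ?thesis using assms induced_path_rev[OF ip] unfolding hole_path_def
    by (simp add: hd_rev last_rev)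
qed

definition segment :: "'a list \<Rightarrow> nat \<Rightarrow> nat \<Rightarrow> 'a list" where
  "segment xs i j = map (nth xs) [i..<Suc j]"

lemma segment_len: "length (segment xs i j) = Suc j - i" by (simp add: segment_def del: upt_Suc)
lemma segment_nth: "k < Suc j - i \<Longrightarrow> segment xs i j ! k = xs ! (i + k)" by (simp add: segment_def del: upt_Suc)

lemma segment_induced_path:
  assumes ip: "induced_path E xs" and ij: "i \<le> j" "j < length xs"
  shows "induced_path E (segment xs i j)"
  unfolding induced_path_def
proof (intro conjI allI impI)
  have d: "distinct xs" using ip induced_path_distinct by blast
  show "distinct (segment xs i j)"
    unfolding segment_def using d ij by (auto simp: distinct_map inj_on_def nth_eq_iff_index_eq)
  fix a b assume a: "a < length (segment xs i j)" and b: "b < length (segment xs i j)"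
  have "E (xs!(i+a)) (xs!(i+b)) \<longleftrightarrow> (i + a = Suc (i + b) \<or> i + b = Suc (i + a))"
    using induced_path_adj[OF ip] a b ij by (simp add: segment_len)
  then show "E (segment xs i j ! a) (segment xs i j ! b) \<longleftrightarrow> (a = Suc b \<or> b = Suc a)"
    using a b by (simp add: segment_len segment_nth)
qed

lemma segment_set: "i \<le> j \<Longrightarrow> j < length xs \<Longrightarrow> set (segment xs i j) \<subseteq> set xs"
  by (auto simp: segment_def)

lemma segment_mem: "i \<le> k \<Longrightarrow> k \<le> j \<Longrightarrow> xs ! k \<in> set (segment xs i j)"
  unfolding segment_def by (simp del: upt_Suc)

lemma segment_hd: "i \<le> j \<Longrightarrow> hd (segment xs i j) = xs ! i"
  by (simp add: segment_def upt_conv_Cons del: upt_Suc)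

lemma segment_last: "i \<le> j \<Longrightarrow> last (segment xs i j) = xs ! j"
  by (simp add: segment_def last_map del: upt_Suc)

section \<open>Holes through a vertex with the NC property\<close>

lemma not_NC_vertexI:
  assumes "hole V E H1" "u \<in> H1" "hole V E H2" "u \<notin> H2" "a \<noteq> c" "E a b" "E b c"
    "a \<in> H1" "b \<in> H1" "c \<in> H1" "a \<in> H2" "b \<in> H2" "c \<in> H2"
  shows "\<not> NC_vertex V E u"
  unfolding NC_vertex_def share_consec_edges_def using assms by blast

lemma hole_of_segment:
  assumes g: "graph V E" and ip: "induced_path E ys" and sV: "set ys \<subseteq> V"
    and ij: "Suc i < j" "j < length ys"
    and x: "x \<in> V" "x \<notin> set ys" "E x (ys!i)" "E x (ys!j)" "\<And>k. i < k \<Longrightarrow> k < j \<Longrightarrow> \<not> E x (ys!k)"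
  shows "hole V E (insert x (set (segment ys i j)))"
proof -
  have ij': "i \<le> j" using ij by simp
  let ?sg = "segment ys i j"
  have len: "length ?sg = Suc j - i" by (rule segment_len)
  show ?thesis
  proof (rule hole_of_induced_path[OF g segment_induced_path[OF ip ij' ij(2)]])
    show "3 \<le> length ?sg" using len ij by simp
    show "set ?sg \<subseteq> V" "x \<notin> set ?sg" using segment_set[OF ij' ij(2)] sV x(2) by auto
    show "E x (hd ?sg)" "E x (last ?sg)" using segment_hd[OF ij', of ys] segment_last[OF ij', of ys] x(3,4) by simp_all
    show "\<not> E x (?sg ! k)" if "0 < k" "k < length ?sg - 1" for k
      using that len segment_nth[of k j i ys] x(5)[of "i + k"] by simp
  qed (rule x(1))
qed

text \<open>The neighbours of x nearest to \<open>ys!s\<close> on either side span, with x, a hole avoiding u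
  that contains the two hole edges at \<open>ys!s\<close>.\<close>

lemma hole_path_two_sided_not_NC:
  assumes g: "graph V E" and up: "hole_path V E u ys" and s: "0 < s" "s < length ys - 1"
    and x: "x \<noteq> u" "x \<in> V" "x \<noteq> ys!s" "\<not> E x (ys!s)"
    and i: "i < s" "E x (ys!i)" and j: "s < j" "j < length ys" "E x (ys!j)"
  shows "\<not> NC_vertex V E u"
proof -
  have ip: "induced_path E ys" and sV: "set ys \<subseteq> V" and un: "u \<notin> set ys"
    and h1: "hole V E (insert u (set ys))"
    using up unfolding hole_path_def by auto
  define I where "I = {i. i < s \<and> E x (ys!i)}"
  define J where "J = {j. s < j \<and> j < length ys \<and> E x (ys!j)}"
  have fI: "finite I" "I \<noteq> {}" using i by (auto simp: I_def)
  have fJ: "finite J" "J \<noteq> {}" using j by (auto simp: J_def)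
  define i' where "i' = Max I"
  define j' where "j' = Min J"
  have i'max: "\<And>k. k \<in> I \<Longrightarrow> k \<le> i'" using fI i'_def by simp
  have j'min: "\<And>k. k \<in> J \<Longrightarrow> j' \<le> k" using fJ j'_def by simp
  have i's: "i' < s" "E x (ys!i')" using Max_in[OF fI] by (auto simp: I_def i'_def)
  have j's: "s < j'" "j' < length ys" "E x (ys!j')" using Min_in[OF fJ] by (auto simp: J_def j'_def)
  have xn: "x \<notin> set ys"
  proof
    assume "x \<in> set ys"
    then obtain k where k: "k < length ys" "x = ys!k" by (auto simp: in_set_conv_nth)
    have "k = Suc i' \<or> i' = Suc k" using induced_path_adj[OF ip k(1), of i'] i's k j's by simp
    moreover have "k = Suc j' \<or> j' = Suc k" using induced_path_adj[OF ip k(1), of j'] j's k by simp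
    ultimately have "k = s" using i's j's by arith
    then show False using k x by simp
  qed
  have h2: "hole V E (insert x (set (segment ys i' j')))"
  proof (rule hole_of_segment[OF g ip sV _ j's(2) x(2) xn i's(2) j's(3)])
    show "Suc i' < j'" using i's j's by simp
    fix k assume k: "i' < k" "k < j'"
    consider "k < s" | "k = s" | "s < k" by linarith
    then show "\<not> E x (ys!k)"
    proof cases
      case 1 then show ?thesis using i'max[of k] k by (auto simp: I_def)
    next
      case 2 then show ?thesis using x by simp
    next
      case 3 then show ?thesis using j'min[of k] k j's by (auto simp: J_def)
    qed
  qed
  have un2: "u \<notin> insert x (set (segment ys i' j'))"
    using x segment_set[of i' j' ys] i's j's un by auto
  have m: "ys!(s-1) \<in> set (segment ys i' j')" "ys!s \<in> set (segment ys i' j')"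
    "ys!(s+1) \<in> set (segment ys i' j')"
    using i's j's by (auto intro!: segment_mem)
  have d: "ys!(s-1) \<noteq> ys!(s+1)"
    using induced_path_distinct[OF ip] s by (simp add: nth_eq_iff_index_eq)
  have e: "E (ys!(s-1)) (ys!s)" "E (ys!s) (ys!(s+1))"
    using induced_path_adj[OF ip] s by auto
  have m2: "ys!(s-1) \<in> set ys" "ys!s \<in> set ys" "ys!(s+1) \<in> set ys" using s by auto
  show ?thesis
    by (rule not_NC_vertexI[OF h1 _ h2 un2 d e]) (use m m2 in auto)
qed

lemma hole_path_one_sided:
  assumes g: "graph V E" and nc: "NC_vertex V E u" and up: "hole_path V E u ys"
    and s: "0 < s" "s < length ys - 1"
    and x: "x \<noteq> u" "x \<in> V" "x \<noteq> ys!s" "\<not> E x (ys!s)"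
  shows "\<exists>ys' s'. hole_path V E u ys' \<and> set ys' = set ys \<and> 0 < s' \<and> s' < length ys' - 1
     \<and> ys'!s' = ys!s \<and> (\<forall>i\<le>s'. \<not> E x (ys'!i))"
proof (cases "\<exists>i<s. E x (ys!i)")
  case False
  then have "\<forall>i\<le>s. \<not> E x (ys!i)" using x by (metis le_neq_implies_less)
  then show ?thesis using up s by blast
next
  case True
  then obtain i where i: "i < s" "E x (ys!i)" by blast
  have "\<not> (\<exists>j. s < j \<and> j < length ys \<and> E x (ys!j))"
    using hole_path_two_sided_not_NC[OF g up s x i] nc by blast
  then have up2: "\<forall>j. s \<le> j \<and> j < length ys \<longrightarrow> \<not> E x (ys!j)" using x by (metis le_neq_implies_less)
  define s' where "s' = length ys - 1 - s"
  have r1: "hole_path V E u (rev ys)" using hole_path_rev[OF up] .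
  have r2: "rev ys ! s' = ys ! s" using s by (simp add: rev_nth s'_def)
  have r3: "\<forall>i\<le>s'. \<not> E x (rev ys ! i)"
  proof (intro allI impI)
    fix i assume "i \<le> s'"
    then have "rev ys ! i = ys ! (length ys - Suc i)" "s \<le> length ys - Suc i" "length ys - Suc i < length ys"
      using s by (auto simp: rev_nth s'_def)
    then show "\<not> E x (rev ys ! i)" using up2 by simp
  qed
  have "0 < s'" "s' < length (rev ys) - 1" using s by (auto simp: s'_def)
  then show ?thesis using r1 r2 r3 by (intro exI[of _ "rev ys"] exI[of _ s']) auto
qed

definition hole_nbhd :: "'a set \<Rightarrow> ('a \<Rightarrow> 'a \<Rightarrow> bool) \<Rightarrow> 'a \<Rightarrow> 'a set" where
  "hole_nbhd V E u = {x. \<exists>H. hole V E H \<and> u \<in> H \<and> x \<in> H}"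

lemma successively_exit:
  "successively E zs \<Longrightarrow> zs \<noteq> [] \<Longrightarrow> hd zs \<in> A \<Longrightarrow> last zs \<notin> A \<Longrightarrow>
    \<exists>i. Suc i < length zs \<and> zs!i \<in> A \<and> zs!Suc i \<notin> A"
proof (induction zs)
  case Nil then show ?case by simp
next
  case (Cons z zs)
  show ?case
  proof (cases zs)
    case Nil then show ?thesis using Cons by simp
  next
    case (Cons z' zs')
    show ?thesis
    proof (cases "z' \<in> A")
      case False
      then show ?thesis using Cons \<open>hd (z # zs) \<in> A\<close> by (intro exI[of _ 0]) auto
    next
      case True
      have "successively E zs" using \<open>successively E (z # zs)\<close> Cons by (simp add: successively_Cons)
      then obtain i where "Suc i < length zs" "zs!i \<in> A" "zs!Suc i \<notin> A"
        using Cons.IH True \<open>zs = z' # zs'\<close> \<open>last (z # zs) \<notin> A\<close> by auto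
      then show ?thesis by (intro exI[of _ "Suc i"]) auto
    qed
  qed
qed

definition arm :: "'a set \<Rightarrow> ('a \<Rightarrow> 'a \<Rightarrow> bool) \<Rightarrow> 'a \<Rightarrow> 'a \<Rightarrow> 'a set \<Rightarrow> bool" where
  "arm V E u a A \<longleftrightarrow> a \<in> A \<and> E u a \<and> A \<subseteq> V \<and> (\<forall>x\<in>A. x \<noteq> a \<longrightarrow> x \<noteq> u \<and> \<not> E u x)
     \<and> (\<forall>x\<in>A. reach_in E A x a)"

lemma arm_reach_in:
  assumes g: "graph V E" and A: "arm V E u a A" and "x \<in> A" "y \<in> A"
  shows "reach_in E A x y"
proof -
  have "reach_in E A x a" "reach_in E A y a" using A assms(3,4) unfolding arm_def by blast+
  then show ?thesis using graph_reach_in_sym[OF g] reach_in_trans by metis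
qed

lemma arm_centre_notin:
  assumes "graph V E" "arm V E u a A"
  shows "u \<notin> A"
  using assms graph_irrefl[OF assms(1)] unfolding arm_def by metis

text \<open>Otherwise an induced a-b path in the union closes with u into a hole; all its vertices lie
  in \<open>hole_nbhd V E u\<close>, hence in A \<union> B, so it must step from A into B.\<close>

lemma hole_arms_touch:
  assumes g: "graph V E" and armA: "arm V E u a A" and armB: "arm V E u b B"
    and pq: "p \<in> A" "q \<in> B"
    and xs: "successively E xs" "xs \<noteq> []" "hd xs = p" "last xs = q" "set xs \<subseteq> V"
      "\<And>x. x \<in> set xs \<Longrightarrow> x \<in> A \<union> B \<or> (x \<notin> hole_nbhd V E u \<and> x \<noteq> u \<and> \<not> E u x)"
  shows "\<exists>x\<in>A. \<exists>y\<in>B. x = y \<or> E x y"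
proof (rule ccontr)
  have A: "a \<in> A" "E u a" "A \<subseteq> V" "\<And>x. x \<in> A \<Longrightarrow> x \<noteq> a \<Longrightarrow> x \<noteq> u \<and> \<not> E u x" "reach_in E A p a"
    using armA pq(1) unfolding arm_def by blast+
  have B: "b \<in> B" "E u b" "B \<subseteq> V" "\<And>x. x \<in> B \<Longrightarrow> x \<noteq> b \<Longrightarrow> x \<noteq> u \<and> \<not> E u x" "reach_in E B q b"
    using armB pq(2) unfolding arm_def by blast+
  assume nc: "\<not> (\<exists>x\<in>A. \<exists>y\<in>B. x = y \<or> E x y)"
  have sym: "\<And>x y. E x y \<Longrightarrow> E y x" using graph_sym[OF g] by blast
  have ab: "a \<noteq> b" "\<not> E a b" "b \<notin> A" using nc A B by blast+
  define S where "S = A \<union> B \<union> set xs"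
  have r1: "reach_in E S a p" using reach_in_mono[of A S] reach_in_sym[OF sym A(5)] by (auto simp: S_def)
  have r2: "reach_in E S p q" using walk_reach_in[OF xs(1,2), of S] xs by (auto simp: S_def)
  have r3: "reach_in E S q b" using reach_in_mono[of B S] B(5) by (auto simp: S_def)
  have r: "reach_in E S a b" using reach_in_trans[OF reach_in_trans[OF r1 r2] r3] .
  have au: "a \<noteq> u" "b \<noteq> u" using A(2) B(2) graph_irrefl[OF g] by auto
  have uS: "u \<notin> S"
  proof
    assume "u \<in> S"
    then show False using A(4)[of u] B(4)[of u] xs(6)[of u] au A(1) B(1) by (auto simp: S_def)
  qed
  have ncS: "\<not> E u z" if "z \<in> S" "z \<noteq> a" "z \<noteq> b" for z
    using that A(4)[of z] B(4)[of z] xs(6)[of z] by (auto simp: S_def)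
  obtain zs where zs: "induced_path E zs" "hd zs = a" "last zs = b" "set zs \<subseteq> S"
      "hole V E (insert u (set zs))" and zn: "zs \<noteq> []"
    using hole_through_apex[OF g A(2) B(2) ab(1,2) _ _ _ uS ncS r] A B xs by (auto simp: S_def)
  have inN: "v \<in> hole_nbhd V E u" if "v \<in> set zs" for v
    using zs(5) that unfolding hole_nbhd_def by blast
  have AB: "v \<in> A \<union> B" if "v \<in> set zs" for v
    using inN[OF that] zs(4) that xs(6)[of v] by (auto simp: S_def)
  obtain i where i: "Suc i < length zs" "zs!i \<in> A" "zs!Suc i \<notin> A"
    using successively_exit[OF induced_path_walk[OF zs(1)] zn, of A] zs A(1) ab(3) by auto
  have "zs!Suc i \<in> B" using AB[of "zs!Suc i"] i by auto
  moreover have "E (zs!i) (zs!Suc i)" using induced_path_adj[OF zs(1)] i by auto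
  ultimately show False using nc i by blast
qed

lemma hole_pathD:
  assumes "hole_path V E u ys"
  shows "induced_path E ys" "3 \<le> length ys" "set ys \<subseteq> V" "u \<notin> set ys" "E u (ys!0)"
    "E u (ys!(length ys - 1))" "\<And>i. 0 < i \<Longrightarrow> i < length ys - 1 \<Longrightarrow> \<not> E u (ys!i)"
    "hole V E (insert u (set ys))" "ys \<noteq> []"
proof -
  have ne: "ys \<noteq> []" using assms unfolding hole_path_def by auto
  then show "E u (ys!0)" "E u (ys!(length ys - 1))"
    using assms unfolding hole_path_def by (auto simp: hd_conv_nth last_conv_nth)
  show "ys \<noteq> []" by fact
qed (use assms in \<open>auto simp: hole_path_def\<close>)

lemma walk_prefix_reach_in:
  assumes "successively E ys" "i \<le> s" "s < length ys" "\<And>k. k \<le> s \<Longrightarrow> ys!k \<in> S"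
    and g: "graph V E"
  shows "reach_in E S (ys!i) (ys!0)" "reach_in E S (ys!0) (ys!i)"
proof -
  show "reach_in E S (ys!0) (ys!i)" using walk_reach_in_nth[OF assms(1), of 0 i S] assms by auto
  then show "reach_in E S (ys!i) (ys!0)" by (rule graph_reach_in_sym[OF g])
qed

lemma hole_path_prefix_arm:
  assumes g: "graph V E" and up: "hole_path V E u ys" and t: "t < length ys - 1"
  shows "arm V E u (ys!0) ((\<lambda>k. ys!k) ` {..t})"
  unfolding arm_def
proof (intro conjI ballI impI)
  note yf = hole_pathD[OF up]
  show "ys!0 \<in> (\<lambda>k. ys!k) ` {..t}" "E u (ys!0)" using yf(5) by auto
  show "(\<lambda>k. ys!k) ` {..t} \<subseteq> V" using yf(3) t by (auto dest!: nth_mem)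
next
  fix x assume "x \<in> (\<lambda>k. ys!k) ` {..t}"
  then obtain k where k: "k \<le> t" "x = ys!k" by blast
  show "reach_in E ((\<lambda>k. ys!k) ` {..t}) x (ys!0)"
    using walk_prefix_reach_in(1)[OF induced_path_walk[OF hole_pathD(1)[OF up]], of k t] k t g by auto
  assume "x \<noteq> ys!0"
  then have "0 < k" using k by (cases k) auto
  then show "x \<noteq> u" "\<not> E u x" using hole_pathD(4,7)[OF up] k t by (auto dest!: nth_mem)
qed

lemma hole_path_suffix_arm:
  assumes g: "graph V E" and up: "hole_path V E u ys" and t: "0 < t" "t < length ys"
  shows "arm V E u (ys!(length ys - 1)) ((\<lambda>k. ys!k) ` {t..<length ys})"
  unfolding arm_def
proof (intro conjI ballI impI)
  note yf = hole_pathD[OF up]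
  show "ys!(length ys - 1) \<in> (\<lambda>k. ys!k) ` {t..<length ys}" using t by (intro imageI) auto
  show "E u (ys!(length ys - 1))" by (rule yf(6))
  show "(\<lambda>k. ys!k) ` {t..<length ys} \<subseteq> V" using yf(3) by (auto dest!: nth_mem)
next
  fix x assume "x \<in> (\<lambda>k. ys!k) ` {t..<length ys}"
  then obtain k where k: "t \<le> k" "k < length ys" "x = ys!k" by auto
  show "reach_in E ((\<lambda>k. ys!k) ` {t..<length ys}) x (ys!(length ys - 1))"
    using walk_reach_in_nth[OF induced_path_walk[OF hole_pathD(1)[OF up]], of k "length ys - 1"] k
    by auto
  assume "x \<noteq> ys!(length ys - 1)"
  then have "k < length ys - 1" using k by (cases "k = length ys - 1") auto
  then show "x \<noteq> u" "\<not> E u x" using hole_pathD(4,7)[OF up] k t by (auto dest!: nth_mem)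
qed

text \<open>The walk through L, from one side of the hole to the other, bypasses its vertex \<open>zs!t\<close>:
  it closes with \<open>zs!t\<close> into a hole avoiding u that shares the two hole edges at \<open>zs!t\<close>.\<close>

lemma hole_path_bypass_not_NC:
  assumes g: "graph V E" and up: "hole_path V E u zs" and t: "0 < t" "t < length zs - 1"
    and L: "L \<subseteq> V" "u \<notin> L" "\<And>x y. x \<in> L \<Longrightarrow> y \<in> L \<Longrightarrow> reach_in E L x y"
      "\<And>x. x \<in> L \<Longrightarrow> x \<noteq> zs!t \<and> \<not> E x (zs!t)"
    and touch1: "k1 < t" "x1 \<in> L" "x1 = zs!k1 \<or> E x1 (zs!k1)"
    and touch2: "t < k2" "k2 < length zs" "x2 \<in> L" "x2 = zs!k2 \<or> E x2 (zs!k2)"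
  shows "\<not> NC_vertex V E u"
proof -
  have sym: "\<And>x y. E x y \<Longrightarrow> E y x" using graph_sym[OF g] by blast
  note zf = hole_pathD[OF up]
  define q where "q = zs!t"
  define m where "m = length zs"
  have zdist: "distinct zs" using induced_path_distinct[OF zf(1)] .
  define S where "S = (L \<union> set zs) - {q}"
  have zsS: "zs!k \<in> S" if "k < m" "k \<noteq> t" for k
    using zdist that t by (auto simp: S_def m_def q_def nth_eq_iff_index_eq)
  have LS: "L \<subseteq> S" using L(4) by (auto simp: S_def q_def)
  have ra: "reach_in E S (zs!(t-1)) (zs!k1)"
    using walk_reach_in_nth[OF induced_path_walk[OF zf(1)], of k1 "t-1" S] touch1(1) t zsS m_def
      graph_reach_in_sym[OF g] by auto
  have rb: "reach_in E S (zs!k1) x1"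
    using reach_in_eq_or_edge[of "zs!k1" x1 E S] touch1 sym LS zsS t m_def by auto
  have rc: "reach_in E S x1 x2" using reach_in_mono[OF LS L(3)[OF touch1(2) touch2(3)]] .
  have rd: "reach_in E S x2 (zs!k2)"
    using reach_in_eq_or_edge[of x2 "zs!k2" E S] touch2 LS zsS m_def by auto
  have re: "reach_in E S (zs!k2) (zs!(t+1))"
    using walk_reach_in_nth[OF induced_path_walk[OF zf(1)], of "t+1" k2 S] touch2 zsS m_def
      graph_reach_in_sym[OF g] by auto
  have r: "reach_in E S (zs!(t-1)) (zs!(t+1))"
    using reach_in_trans[OF reach_in_trans[OF reach_in_trans[OF reach_in_trans[OF ra rb] rc] rd] re] .
  have eqa: "E q (zs!(t-1))" "E q (zs!(t+1))"
    using induced_path_adj[OF zf(1), of t "t-1"] induced_path_adj[OF zf(1), of t "t+1"] t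
    by (auto simp: q_def)
  have ab: "zs!(t-1) \<noteq> zs!(t+1)" "\<not> E (zs!(t-1)) (zs!(t+1))"
    using zdist induced_path_adj[OF zf(1), of "t-1" "t+1"] t by (auto simp: nth_eq_iff_index_eq)
  have SV: "S \<subseteq> V" using L(1) zf(3) by (auto simp: S_def)
  have abS: "zs!(t-1) \<in> S" "zs!(t+1) \<in> S" using zsS t m_def by auto
  have qS: "q \<notin> S" by (simp add: S_def)
  have ncS: "\<not> E q z" if z: "z \<in> S" "z \<noteq> zs!(t-1)" "z \<noteq> zs!(t+1)" for z
  proof (cases "z \<in> L")
    case True then show ?thesis using L(4) sym q_def by blast
  next
    case False
    then obtain k where k: "k < m" "z = zs!k" "k \<noteq> t"
      using z by (auto simp: S_def in_set_conv_nth m_def q_def)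
    show ?thesis
    proof
      assume "E q z"
      then have "t = Suc k \<or> k = Suc t" using induced_path_adj[OF zf(1), of t k] t k m_def q_def by auto
      then show False using z k by auto
    qed
  qed
  obtain zs2 where zs2: "induced_path E zs2" "zs2 \<noteq> []" "hd zs2 = zs!(t-1)" "last zs2 = zs!(t+1)"
      "set zs2 \<subseteq> S" "hole V E (insert q (set zs2))"
    using hole_through_apex[OF g eqa ab SV abS qS ncS r] by blast
  have ab2: "zs!(t-1) \<in> set zs2" "zs!(t+1) \<in> set zs2" using zs2 by (metis hd_in_set last_in_set)+
  have zm: "q \<in> set zs" "zs!(t-1) \<in> set zs" "zs!(t+1) \<in> set zs"
    using t by (auto simp: q_def)
  have u2: "u \<notin> insert q (set zs2)" using zs2(5) zm(1) zf(4) L(2) by (auto simp: S_def)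
  show ?thesis
    by (rule not_NC_vertexI[OF zf(8) _ zs2(6) u2 ab(1) _ eqa(2)])
       (use eqa sym ab2 zm in auto)
qed

lemma arm_touching_hole_vertex_not_NC:
  assumes g: "graph V E" and armL: "arm V E u a L"
    and Lq: "\<And>x. x \<in> L \<Longrightarrow> x \<noteq> q \<and> \<not> E x q"
    and q: "q \<in> hole_nbhd V E u" "q \<noteq> u" "\<not> E u q"
    and touch: "\<And>b B. arm V E u b B \<Longrightarrow> q \<in> B \<Longrightarrow> \<exists>x\<in>L. \<exists>y\<in>B. x = y \<or> E x y"
  shows "\<not> NC_vertex V E u"
proof -
  obtain Hq where Hq: "hole V E Hq" "u \<in> Hq" "q \<in> Hq" using q(1) unfolding hole_nbhd_def by blast
  obtain zs where zs: "hole_path V E u zs" "set zs = Hq - {u}"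
    using hole_path_exists[OF g Hq(1,2)] by blast
  note zf = hole_pathD[OF zs(1)]
  define m where "m = length zs"
  have "q \<in> set zs" using zs(2) Hq q(2) by auto
  then obtain t where t: "t < m" "zs!t = q" by (auto simp: in_set_conv_nth m_def)
  have "t \<noteq> 0" "t \<noteq> m - 1" using t zf(5,6) q(3) m_def by metis+
  then have tt: "0 < t" "t < m - 1" using t by auto
  obtain x1 y1 where xy1: "x1 \<in> L" "y1 \<in> (\<lambda>k. zs!k) ` {..t}" "x1 = y1 \<or> E x1 y1"
    using touch[OF hole_path_prefix_arm[OF g zs(1), of t]] tt t m_def by fastforce
  obtain x2 y2 where xy2: "x2 \<in> L" "y2 \<in> (\<lambda>k. zs!k) ` {t..<m}" "x2 = y2 \<or> E x2 y2"
    using touch[OF hole_path_suffix_arm[OF g zs(1), of t]] tt t m_def by fastforce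
  have "y1 \<noteq> q" "y2 \<noteq> q" using xy1 xy2 Lq by blast+
  then obtain k1 k2 where k1: "k1 < t" "y1 = zs!k1" and k2: "t < k2" "k2 < m" "y2 = zs!k2"
    using xy1(2) xy2(2) t by (auto simp: le_less)
  show ?thesis
  proof (rule hole_path_bypass_not_NC[OF g zs(1) tt[unfolded m_def] _ _ _ _
        k1(1) xy1(1) _ k2(1) k2(2)[unfolded m_def] xy2(1)])
    show "L \<subseteq> V" "u \<notin> L" using armL arm_centre_notin[OF g armL] unfolding arm_def by auto
    show "reach_in E L x y" if "x \<in> L" "y \<in> L" for x y using arm_reach_in[OF g armL that] .
    show "x \<noteq> zs!t \<and> \<not> E x (zs!t)" if "x \<in> L" for x using Lq[OF that] t by simp
  qed (use k1(2) k2(3) xy1(3) xy2(3) in auto)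
qed

text \<open>The prefix of the hole path up to \<open>ys!s\<close> is an arm of u kept away from q, and xs joins it
  to every arm of u containing q.\<close>

lemma no_detour_one_sided:
  assumes g: "graph V E" and nc: "NC_vertex V E u" and up: "hole_path V E u ys"
    and s: "0 < s" "s < length ys - 1"
    and xs: "induced_path E xs" "3 \<le> length xs" "set xs \<subseteq> V" "u \<notin> set xs" "hd xs = ys!s" "last xs = q"
    and int: "\<And>k. 0 < k \<Longrightarrow> k < length xs - 1 \<Longrightarrow> xs!k \<notin> hole_nbhd V E u \<and> \<not> E u (xs!k)"
    and qc: "E u q \<or> (q \<in> hole_nbhd V E u \<and> \<not> E u q)"
    and low: "\<forall>i\<le>s. \<not> E q (ys!i)"
  shows False
proof -
  define p where "p = ys!s"
  define n where "n = length xs"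
  define L where "L = (\<lambda>k. ys!k) ` {..s}"
  have armL: "arm V E u (ys!0) L" unfolding L_def by (rule hole_path_prefix_arm[OF g up s(2)])
  have pL: "p \<in> L" by (simp add: L_def p_def)
  have xn: "xs \<noteq> []" using xs(2) by auto
  have x0: "xs!0 = p" using xs(5) xn by (simp add: hd_conv_nth p_def)
  have xl: "xs!(n-1) = q" using xs(6) xn by (simp add: last_conv_nth n_def)
  have n3: "0 < n" "n - 1 < n" "0 \<noteq> n - 1" using xs(2) n_def by linarith+
  have pq: "p \<noteq> q" using induced_path_distinct[OF xs(1)] x0 xl n3 n_def by (metis nth_eq_iff_index_eq)
  have qin: "q \<in> set xs" using xl n3 n_def by (metis nth_mem)
  have qu: "q \<noteq> u" using qin xs(4) by auto
  have xs_in: "x \<in> L \<union> B \<or> (x \<notin> hole_nbhd V E u \<and> x \<noteq> u \<and> \<not> E u x)"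
    if x: "x \<in> set xs" and B: "q \<in> B" for x B
  proof -
    obtain k where k: "k < n" "x = xs!k" using x by (auto simp: in_set_conv_nth n_def)
    show ?thesis
    proof (cases "k = 0 \<or> k = n - 1")
      case True then show ?thesis using k x0 xl pL B by auto
    next
      case False
      then have "0 < k" "k < length xs - 1" using k n_def by auto
      then show ?thesis using int[of k] k xs(4) x by auto
    qed
  qed
  have touch: "\<exists>x\<in>L. \<exists>y\<in>B. x = y \<or> E x y" if "arm V E u b B" "q \<in> B" for b B
    using hole_arms_touch[OF g armL that(1) pL that(2) induced_path_walk[OF xs(1)] xn]
      xs(3,5,6) xs_in that(2) by (auto simp: p_def)
  have Lq: "x \<noteq> q \<and> \<not> E x q" if x: "x \<in> L" for x
  proof -
    obtain k where k: "k \<le> s" "x = ys!k" using x by (auto simp: L_def)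
    have "\<not> E x q" using low k graph_sym[OF g] by blast
    moreover have "x \<noteq> q"
    proof
      assume xq: "x = q"
      have "k \<noteq> s" using xq k pq p_def by auto
      then have "Suc k \<le> s" using k by simp
      moreover have "E (ys!k) (ys!Suc k)"
        using induced_path_adj[OF hole_pathD(1)[OF up], of k "Suc k"] s k by simp
      ultimately show False using low xq k by auto
    qed
    ultimately show ?thesis by blast
  qed
  show False
  proof (cases "E u q")
    case True
    have "arm V E u q {q}"
      using True xs(3) qin qu by (auto simp: arm_def reach_in_refl)
    then show False using touch Lq by blast
  next
    case False
    have "\<not> NC_vertex V E u"
    proof (rule arm_touching_hole_vertex_not_NC[OF g armL])
      show "x \<noteq> q \<and> \<not> E x q" if "x \<in> L" for x using Lq that .
      show "q \<in> hole_nbhd V E u" "q \<noteq> u" "\<not> E u q" using qc qu False by auto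
      show "\<exists>x\<in>L. \<exists>y\<in>B. x = y \<or> E x y" if "arm V E u b B" "q \<in> B" for b B
        using touch that .
    qed
    then show False using nc by blast
  qed
qed

lemma no_detour_from_hole_vertex:
  assumes g: "graph V E" and nc: "NC_vertex V E u"
    and xs: "induced_path E xs" "3 \<le> length xs" "set xs \<subseteq> V" "u \<notin> set xs"
    and int: "\<And>k. 0 < k \<Longrightarrow> k < length xs - 1 \<Longrightarrow> xs!k \<notin> hole_nbhd V E u \<and> \<not> E u (xs!k)"
    and pc: "hd xs \<in> hole_nbhd V E u" "\<not> E u (hd xs)"
    and qc: "E u (last xs) \<or> (last xs \<in> hole_nbhd V E u \<and> \<not> E u (last xs))"
  shows False
proof -
  define p where "p = hd xs"
  define q where "q = last xs"
  define n where "n = length xs"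
  have xn: "xs \<noteq> []" using xs(2) by auto
  have x0: "xs!0 = p" using xn by (simp add: hd_conv_nth p_def)
  have xl: "xs!(n-1) = q" using xn by (simp add: last_conv_nth n_def q_def)
  have n3: "0 < n" "n - 1 < n" "0 \<noteq> n - 1" "n - 1 \<noteq> Suc 0" using xs(2) n_def by linarith+
  have pq: "p \<noteq> q" using induced_path_distinct[OF xs(1)] x0 xl n3 n_def by (metis nth_eq_iff_index_eq)
  have npq: "\<not> E q p" using induced_path_adj[OF xs(1), of "n-1" 0] x0 xl n3 n_def by simp
  have pin: "p \<in> set xs" using xn p_def by simp
  have qin: "q \<in> set xs" using xn q_def by simp
  have qV: "q \<in> V" using qin xs(3) by auto
  have qu: "q \<noteq> u" "p \<noteq> u" using qin pin xs(4) by auto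
  obtain Hp where Hp: "hole V E Hp" "u \<in> Hp" "p \<in> Hp" using pc(1) unfolding hole_nbhd_def p_def by blast
  obtain ys where ys: "hole_path V E u ys" "set ys = Hp - {u}" using hole_path_exists[OF g Hp(1,2)] by blast
  note yf = hole_pathD[OF ys(1)]
  have "p \<in> set ys" using ys(2) Hp qu by auto
  then obtain s where s: "s < length ys" "ys!s = p" by (auto simp: in_set_conv_nth)
  have s0: "s \<noteq> 0" using s yf(5) pc(2) p_def by metis
  have s1: "s \<noteq> length ys - 1" using s yf(6) pc(2) p_def by metis
  have ss: "0 < s" "s < length ys - 1" using s0 s1 s by auto
  obtain ys' s' where ys': "hole_path V E u ys'" "set ys' = set ys" "0 < s'" "s' < length ys' - 1"
      "ys'!s' = ys!s" "\<forall>i\<le>s'. \<not> E q (ys'!i)"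
    using hole_path_one_sided[OF g nc ys(1) ss qu(1) qV] pq npq s by auto
  show False
    by (rule no_detour_one_sided[OF g nc ys'(1) ys'(3,4) xs _ _ int _ ys'(6)])
       (use ys' s p_def q_def qc in auto)
qed

text \<open>Closed up by u, such a path would be a hole through u after locally chordalizing by u.\<close>

lemma no_detour:
  assumes g: "graph V E" and nc: "NC_vertex V E u"
    and xs: "induced_path E xs" "3 \<le> length xs" "set xs \<subseteq> V" "u \<notin> set xs"
    and int: "\<And>k. 0 < k \<Longrightarrow> k < length xs - 1 \<Longrightarrow> xs!k \<notin> hole_nbhd V E u \<and> \<not> E u (xs!k)"
    and pc: "E u (hd xs) \<or> (hd xs \<in> hole_nbhd V E u \<and> \<not> E u (hd xs))"
    and qc: "E u (last xs) \<or> (last xs \<in> hole_nbhd V E u \<and> \<not> E u (last xs))"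
  shows False
proof (cases "E u (hd xs)")
  case False
  then show ?thesis using no_detour_from_hole_vertex[OF g nc xs int] pc qc by blast
next
  case hdu: True
  show ?thesis
  proof (cases "E u (last xs)")
    case True
    have uV: "u \<in> V" using graph_edgeD1[OF g hdu] .
    have "hole V E (insert u (set xs))"
      using hole_of_induced_path[OF g xs(1,2,3) uV xs(4) hdu True] int by blast
    moreover have "xs!1 \<in> set xs" using xs(2) by simp
    ultimately have "xs!1 \<in> hole_nbhd V E u" unfolding hole_nbhd_def by blast
    moreover have "1 < length xs - 1" using xs(2) by linarith
    ultimately show False using int[of 1] by auto
  next
    case False
    define n where "n = length xs"
    have xn: "xs \<noteq> []" using xs(2) by auto
    have int': "rev xs ! k \<notin> hole_nbhd V E u \<and> \<not> E u (rev xs ! k)"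
      if k: "0 < k" "k < length (rev xs) - 1" for k
    proof -
      have "rev xs ! k = xs ! (length xs - Suc k)" using k by (simp add: rev_nth)
      moreover have "0 < length xs - Suc k" "length xs - Suc k < length xs - 1" using k by auto
      ultimately show ?thesis using int by simp
    qed
    show False
      by (rule no_detour_from_hole_vertex[OF g nc induced_path_rev[OF xs(1)] _ _ _ int'])
         (use xs False qc hdu xn in \<open>auto simp: hd_rev last_rev\<close>)
  qed
qed

lemma hole_nbhd_arm_avoiding:
  assumes g: "graph V E" and nc: "NC_vertex V E u"
    and w: "w \<in> hole_nbhd V E u" "w \<noteq> u" "\<not> E u w"
    and x: "x \<in> V" "\<not> E x w" "\<And>H. hole V E H \<Longrightarrow> u \<in> H \<Longrightarrow> x \<notin> H"
  obtains a A where "arm V E u a A" "w \<in> A" "\<And>y. y \<in> A \<Longrightarrow> y \<noteq> x \<and> \<not> E x y"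
proof -
  obtain H where H: "hole V E H" "u \<in> H" "w \<in> H" using w(1) unfolding hole_nbhd_def by blast
  obtain ys where ys: "hole_path V E u ys" "set ys = H - {u}" using hole_path_exists[OF g H(1,2)] by blast
  note yf = hole_pathD[OF ys(1)]
  have "w \<in> set ys" using ys(2) H w(2) by auto
  then obtain s where s: "s < length ys" "ys!s = w" by (auto simp: in_set_conv_nth)
  have "s \<noteq> 0" "s \<noteq> length ys - 1" using s yf(5,6) w(3) by metis+
  then have ss: "0 < s" "s < length ys - 1" using s by auto
  have xH: "x \<notin> H" using x(3) H by blast
  then have "x \<noteq> u" "x \<noteq> ys!s" "\<not> E x (ys!s)" using H s x(2) by auto
  then obtain ys1 s1 where ys1: "hole_path V E u ys1" "set ys1 = set ys" "0 < s1" "s1 < length ys1 - 1"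
      "ys1!s1 = ys!s" "\<forall>i\<le>s1. \<not> E x (ys1!i)"
    using hole_path_one_sided[OF g nc ys(1) ss _ x(1)] by blast
  show thesis
  proof (rule that)
    show "arm V E u (ys1!0) ((\<lambda>k. ys1!k) ` {..s1})" by (rule hole_path_prefix_arm[OF g ys1(1,4)])
    show "w \<in> (\<lambda>k. ys1!k) ` {..s1}" using ys1(5) s by auto
    fix y assume "y \<in> (\<lambda>k. ys1!k) ` {..s1}"
    then obtain k where k: "k \<le> s1" "y = ys1!k" by blast
    have "k < length ys1" using k ys1(4) by linarith
    then have "y \<in> set ys" using k(2) ys1(2) nth_mem by metis
    then show "y \<noteq> x \<and> \<not> E x y" using xH ys(2) ys1(6) k by auto
  qed
qed

lemma adjacent_NC_vertices_common_hole:
  assumes g: "graph V E" and ncc: "NC_vertex V E c" and ncc': "NC_vertex V E c'"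
    and e: "E c c'" and w: "w \<in> hole_nbhd V E c" "w \<in> hole_nbhd V E c'" "\<not> E c w" "\<not> E c' w"
  shows "\<exists>H. hole V E H \<and> c \<in> H \<and> c' \<in> H"
proof (rule ccontr)
  assume no_common: "\<nexists>H. hole V E H \<and> c \<in> H \<and> c' \<in> H"
  then have c'_off: "c' \<notin> H" and c_off: "c \<notin> H'" if "hole V E H" "c \<in> H" "hole V E H'" "c' \<in> H'"
    for H H' using that by blast+
  have "w \<noteq> c" "w \<noteq> c'" using e w graph_sym[OF g] by auto
  have cV: "c \<in> V" "c' \<in> V" using graph_edgeD1[OF g e] graph_edgeD2[OF g e] by auto
  obtain a A where A: "arm V E c a A" "w \<in> A" "\<And>y. y \<in> A \<Longrightarrow> y \<noteq> c' \<and> \<not> E c' y"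
    using hole_nbhd_arm_avoiding[OF g ncc w(1) \<open>w \<noteq> c\<close> w(3) cV(2) w(4)] c'_off by blast
  obtain b B where B: "arm V E c' b B" "w \<in> B" "\<And>y. y \<in> B \<Longrightarrow> y \<noteq> c \<and> \<not> E c y"
    using hole_nbhd_arm_avoiding[OF g ncc' w(2) \<open>w \<noteq> c'\<close> w(4) cV(1) w(3)] c_off by blast
  define S where "S = insert c' (A \<union> B)"
  have "reach_in E S c' b" using B(1) by (intro reach_in_edge) (auto simp: S_def arm_def)
  moreover have "reach_in E S b w"
    using reach_in_mono[of B S] arm_reach_in[OF g B(1) _ B(2)] B(1) by (auto simp: S_def arm_def)
  moreover have "reach_in E S w a"
    using reach_in_mono[of A S] arm_reach_in[OF g A(1) A(2)] A(1) by (auto simp: S_def arm_def)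
  ultimately have r: "reach_in E S c' a" by (metis reach_in_trans)
  have "c' \<noteq> a" "\<not> E c' a" "E c a" "a \<in> A" using A(1,3) unfolding arm_def by blast+
  have SV: "S \<subseteq> V" using cV A(1) B(1) unfolding S_def arm_def by auto
  have cS: "c \<notin> S" using e graph_irrefl[OF g] arm_centre_notin[OF g A(1)] B(3) by (auto simp: S_def)
  have ncS: "\<not> E c z" if "z \<in> S" "z \<noteq> c'" "z \<noteq> a" for z
    using that A(1) B(3) unfolding S_def arm_def by auto
  obtain zs where "induced_path E zs" "zs \<noteq> []" "hd zs = c'" "hole V E (insert c (set zs))"
    using hole_through_apex[OF g e \<open>E c a\<close> \<open>c' \<noteq> a\<close> \<open>\<not> E c' a\<close> SV _ _ cS ncS r] \<open>a \<in> A\<close>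
    by (auto simp: S_def)
  then show False using no_common by (metis hd_in_set insertCI)
qed

section \<open>Local chordalization\<close>

lemma local_chordalize_iff: "local_chordalize V E u x y \<longleftrightarrow>
   E x y \<or> (x = u \<and> y \<noteq> u \<and> y \<in> hole_nbhd V E u) \<or> (y = u \<and> x \<noteq> u \<and> x \<in> hole_nbhd V E u)"
  unfolding local_chordalize_def hole_nbhd_def by blast

lemma hole_nbhd_in_V: "x \<in> hole_nbhd V E u \<Longrightarrow> x \<in> V \<and> u \<in> V"
  unfolding hole_nbhd_def hole_iff_reach_in by blast

lemma graph_local_chordalize:
  assumes g: "graph V E" shows "graph V (local_chordalize V E u)"
proof -
  have a: "x \<in> V \<and> y \<in> V" if "local_chordalize V E u x y" for x y
    using that g hole_nbhd_in_V[of _ V E u] unfolding graph_def local_chordalize_iff by blast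
  have b: "local_chordalize V E u y x" if "local_chordalize V E u x y" for x y
    using that g unfolding graph_def local_chordalize_iff by blast
  have c: "\<not> local_chordalize V E u x x" for x
    using g unfolding graph_def local_chordalize_iff by blast
  show ?thesis using a b c g unfolding graph_def by blast
qed

lemma hole_cong:
  assumes "\<And>x y. x \<in> H \<Longrightarrow> y \<in> H \<Longrightarrow> E1 x y = E2 x y"
  shows "hole V E1 H = hole V E2 H"
proof -
  have rel: "(\<lambda>a b. E1 a b \<and> a \<in> H \<and> b \<in> H) = (\<lambda>a b. E2 a b \<and> a \<in> H \<and> b \<in> H)"
    using assms by (intro ext) blast
  have cs: "\<forall>x\<in>H. {y\<in>H. E1 x y} = {y\<in>H. E2 x y}" using assms by blast
  show ?thesis unfolding hole_def rel using cs by simp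
qed

lemma induced_path_cong:
  assumes "\<And>x y. x \<in> set xs \<Longrightarrow> y \<in> set xs \<Longrightarrow> E1 x y = E2 x y"
  shows "induced_path E1 xs = induced_path E2 xs"
  unfolding induced_path_def using assms by (metis nth_mem)

lemma hole_local_chordalize:
  assumes g: "graph V E" and nc: "NC_vertex V E u"
    and h: "hole V (local_chordalize V E u) H"
  shows "hole V E H \<and> u \<notin> H"
proof -
  define E' where "E' = local_chordalize V E u"
  have g': "graph V E'" using graph_local_chordalize[OF g] E'_def by simp
  have uH: "u \<notin> H"
  proof
    assume u: "u \<in> H"
    obtain ys where ys: "hole_path V E' u ys" using hole_path_exists[OF g' h[folded E'_def] u] by blast
    note yf = hole_pathD[OF ys(1)]
    have eq: "E' x y = E x y" if "x \<in> set ys" "y \<in> set ys" for x y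
      using that yf(4) unfolding E'_def local_chordalize_iff by auto
    have ip: "induced_path E ys" using induced_path_cong[of ys E' E] eq yf(1) by blast
    have yn: "ys \<noteq> []" by (rule yf(9))
    have conv: "E u x \<or> (x \<in> hole_nbhd V E u \<and> \<not> E u x)" if "E' u x" for x
      using that unfolding E'_def local_chordalize_iff by auto
    show False
    proof (rule no_detour[OF g nc ip yf(2,3,4)])
      fix k assume k: "0 < k" "k < length ys - 1"
      have "\<not> E' u (ys!k)" using yf(7)[OF k] .
      moreover have "k < length ys" using k by linarith
      then have "ys!k \<noteq> u" using yf(4) nth_mem by metis
      ultimately show "ys!k \<notin> hole_nbhd V E u \<and> \<not> E u (ys!k)" unfolding E'_def local_chordalize_iff by auto
    next
      show "E u (hd ys) \<or> (hd ys \<in> hole_nbhd V E u \<and> \<not> E u (hd ys))"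
        using conv ys unfolding hole_path_def by blast
      show "E u (last ys) \<or> (last ys \<in> hole_nbhd V E u \<and> \<not> E u (last ys))"
        using conv ys unfolding hole_path_def by blast
    qed
  qed
  have "hole V E H = hole V E' H"
    by (rule hole_cong) (use uH in \<open>auto simp: E'_def local_chordalize_iff\<close>)
  then show ?thesis using h uH E'_def by simp
qed

lemma NC_vertex_local_chordalize:
  assumes g: "graph V E" and nc: "NC_vertex V E u" and ncw: "NC_vertex V E w"
  shows "NC_vertex V (local_chordalize V E u) w"
  unfolding NC_vertex_def
proof
  assume "\<exists>H H'. hole V (local_chordalize V E u) H \<and> w \<in> H \<and> hole V (local_chordalize V E u) H'
      \<and> w \<notin> H' \<and> share_consec_edges (local_chordalize V E u) H H'"
  then obtain H H' where hh: "hole V (local_chordalize V E u) H" "w \<in> H"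
      "hole V (local_chordalize V E u) H'" "w \<notin> H'" "share_consec_edges (local_chordalize V E u) H H'"
    by blast
  have h1: "hole V E H" "u \<notin> H" using hole_local_chordalize[OF g nc hh(1)] by auto
  have h2: "hole V E H'" using hole_local_chordalize[OF g nc hh(3)] by auto
  have "share_consec_edges E H H'"
    using hh(5) h1(2) unfolding share_consec_edges_def local_chordalize_iff by blast
  then show False using ncw h1 h2 hh(2,4) unfolding NC_vertex_def by blast
qed

lemma NC_vertex_local_chordalize_self:
  assumes g: "graph V E" and nc: "NC_vertex V E u"
  shows "NC_vertex V (local_chordalize V E u) u"
  unfolding NC_vertex_def using hole_local_chordalize[OF g nc] by blast

lemma hat_edges_Nil: "hat_edges V E [] = E" by (simp add: hat_edges_def)
lemma hat_edges_Cons: "hat_edges V E (u # us) = hat_edges V (local_chordalize V E u) us"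
  by (simp add: hat_edges_def)

lemma hat_edges_holes_and_edges:
  "graph V E0 \<Longrightarrow> (\<forall>c\<in>set us. NC_vertex V E0 c) \<Longrightarrow>
   (\<forall>H. hole V (hat_edges V E0 us) H \<longrightarrow> hole V E0 H) \<and>
   (\<forall>x y. hat_edges V E0 us x y \<longrightarrow> E0 x y \<or>
      (\<exists>c\<in>set us. (x = c \<and> y \<noteq> c \<and> y \<in> hole_nbhd V E0 c) \<or> (y = c \<and> x \<noteq> c \<and> x \<in> hole_nbhd V E0 c)))"
proof (induction us arbitrary: E0)
  case Nil then show ?case by (simp add: hat_edges_Nil)
next
  case (Cons u us)
  define E1 where "E1 = local_chordalize V E0 u"
  have g1: "graph V E1" using graph_local_chordalize[OF Cons.prems(1)] E1_def by simp
  have ncu: "NC_vertex V E0 u" using Cons.prems(2) by simp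
  have nc1: "\<forall>c\<in>set us. NC_vertex V E1 c"
  proof
    fix c assume c: "c \<in> set us"
    show "NC_vertex V E1 c"
    proof (cases "c = u")
      case True then show ?thesis using NC_vertex_local_chordalize_self[OF Cons.prems(1) ncu] E1_def by simp
    next
      case False then show ?thesis using NC_vertex_local_chordalize[OF Cons.prems(1) ncu] Cons.prems(2) c E1_def by simp
    qed
  qed
  note IH = Cons.IH[OF g1 nc1]
  have hh: "hole V E0 H" if "hole V E1 H" for H
    using hole_local_chordalize[OF Cons.prems(1) ncu] that E1_def by blast
  have Nsub: "hole_nbhd V E1 c \<subseteq> hole_nbhd V E0 c" for c
    using hh unfolding hole_nbhd_def by blast
  show ?case unfolding hat_edges_Cons E1_def[symmetric]
  proof (intro conjI allI impI)
    fix H assume "hole V (hat_edges V E1 us) H"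
    then show "hole V E0 H" using IH hh by blast
  next
    fix x y assume "hat_edges V E1 us x y"
    then have "E1 x y \<or> (\<exists>c\<in>set us. (x = c \<and> y \<noteq> c \<and> y \<in> hole_nbhd V E1 c) \<or> (y = c \<and> x \<noteq> c \<and> x \<in> hole_nbhd V E1 c))"
      using IH by blast
    then show "E0 x y \<or> (\<exists>c\<in>set (u # us). (x = c \<and> y \<noteq> c \<and> y \<in> hole_nbhd V E0 c) \<or> (y = c \<and> x \<noteq> c \<and> x \<in> hole_nbhd V E0 c))"
      using Nsub unfolding E1_def local_chordalize_iff by fastforce
  qed
qed

section \<open>Cliques of the chordalized graph\<close>

lemma induced_path_3:
  assumes g: "graph V E" and "a \<noteq> b" "b \<noteq> c" "a \<noteq> c" "E a b" "E b c" "\<not> E a c"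
  shows "induced_path E [a, b, c]"
proof -
  have s: "E b a" "E c b" "\<not> E c a" using assms graph_sym[OF g] by blast+
  have i: "\<not> E a a" "\<not> E b b" "\<not> E c c" using graph_irrefl[OF g] by blast+
  have "E ([a,b,c]!i) ([a,b,c]!j) \<longleftrightarrow> (i = Suc j \<or> j = Suc i)" if "i < 3" "j < 3" for i j
  proof -
    have "i = 0 \<or> i = 1 \<or> i = 2" "j = 0 \<or> j = 1 \<or> j = 2" using that by linarith+
    then show ?thesis using assms s i by auto
  qed
  then show ?thesis unfolding induced_path_def using assms by auto
qed

lemma NC_set_centre_unique:
  assumes "NC_set V E C" "hole V E H" "c \<in> C \<inter> H" "c' \<in> C \<inter> H"
  shows "c = c'"
proof (rule ccontr)
  assume "c \<noteq> c'"
  have "finite H" using assms(2) unfolding hole_def by blast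
  then have "card {c, c'} \<le> card (H \<inter> C)" using assms(3,4) by (intro card_mono) auto
  moreover have "card (H \<inter> C) \<le> 1" using assms(1,2) unfolding NC_set_def by blast
  ultimately show False using \<open>c \<noteq> c'\<close> by simp
qed

lemma NC_set_hole_nbhd_centre:
  assumes "NC_set V E C" "c \<in> C" "w \<in> C" "w \<in> hole_nbhd V E c"
  shows "w = c"
proof -
  obtain H where "hole V E H" "c \<in> H" "w \<in> H" using assms(4) unfolding hole_nbhd_def by blast
  then show ?thesis using NC_set_centre_unique[OF assms(1)] assms(2,3) by blast
qed

lemma hat_edge_cases:
  assumes g: "graph V E" and nc: "NC_set V E C" and us: "set us = C"
    and e: "hat_edges V E us x y"
  shows "E x y \<or> (\<exists>c\<in>C. (x = c \<and> y \<in> hole_nbhd V E c - C) \<or> (y = c \<and> x \<in> hole_nbhd V E c - C))"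
proof -
  have "\<forall>c\<in>set us. NC_vertex V E c" using nc us unfolding NC_set_def by blast
  then have "E x y \<or> (\<exists>c\<in>C. (x = c \<and> y \<noteq> c \<and> y \<in> hole_nbhd V E c)
      \<or> (y = c \<and> x \<noteq> c \<and> x \<in> hole_nbhd V E c))"
    using hat_edges_holes_and_edges[OF g] e us by blast
  then show ?thesis using NC_set_hole_nbhd_centre[OF nc] by blast
qed

lemma missing_edge_centre:
  assumes g: "graph V E" and nc: "NC_set V E C" and us: "set us = C"
    and "hat_edges V E us x y" "\<not> E x y"
  obtains c w where "c \<in> C" "{x, y} = {c, w}" "w \<in> hole_nbhd V E c - C" "\<not> E c w"
proof -
  obtain c where "c \<in> C"
    and "(x = c \<and> y \<in> hole_nbhd V E c - C) \<or> (y = c \<and> x \<in> hole_nbhd V E c - C)"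
    using hat_edge_cases[OF g nc us assms(4)] assms(5) by blast
  then show thesis
  proof (elim disjE conjE)
    assume "x = c" "y \<in> hole_nbhd V E c - C"
    then show thesis using that[of c y] \<open>c \<in> C\<close> assms(5) by simp
  next
    assume "y = c" "x \<in> hole_nbhd V E c - C"
    moreover have "{x, y} = {c, x}" "\<not> E c x"
      using \<open>y = c\<close> assms(5) graph_sym[OF g] by auto
    ultimately show thesis using that[of c x] \<open>c \<in> C\<close> by simp
  qed
qed

lemma missing_edges_share_centre:
  assumes g: "graph V E" and nc: "NC_set V E C" and us: "set us = C"
    and K: "clique V (hat_edges V E us) K"
    and cw: "c \<in> C" "c \<in> K" "w \<in> K" "w \<in> hole_nbhd V E c - C" "\<not> E c w"
    and cw': "c' \<in> C" "c' \<in> K" "w' \<in> K" "w' \<in> hole_nbhd V E c' - C" "\<not> E c' w'"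
  shows "c = c'"
proof (rule ccontr)
  assume "c \<noteq> c'"
  have hat_cases: "E x y \<or> (\<exists>c\<in>C. (x = c \<and> y \<in> hole_nbhd V E c - C) \<or> (y = c \<and> x \<in> hole_nbhd V E c - C))"
    if "x \<in> K" "y \<in> K" "x \<noteq> y" for x y
  proof -
    have "hat_edges V E us x y" using K that unfolding clique_def by blast
    then show ?thesis by (rule hat_edge_cases[OF g nc us])
  qed
  have NC: "NC_vertex V E c" "NC_vertex V E c'" using nc cw(1) cw'(1) unfolding NC_set_def by blast+
  have no_common_hole: "\<not> (hole V E H \<and> c \<in> H \<and> c' \<in> H)" for H
    using NC_set_centre_unique[OF nc, of H c c'] \<open>c \<noteq> c'\<close> cw(1) cw'(1) by blast
  have "E c c'" using hat_cases[OF cw(2) cw'(2) \<open>c \<noteq> c'\<close>] cw(1) cw'(1) by blast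
  have "E c' w"
  proof (rule ccontr)
    assume "\<not> E c' w"
    moreover have "c' \<noteq> w" using cw(4) cw'(1) by blast
    ultimately have "w \<in> hole_nbhd V E c'" using hat_cases[OF cw'(2) cw(3)] cw(4) by auto
    then obtain H where "hole V E H" "c \<in> H" "c' \<in> H"
      using adjacent_NC_vertices_common_hole[OF g NC \<open>E c c'\<close> DiffD1[OF cw(4)]] cw(5)
        \<open>\<not> E c' w\<close> by blast
    then show False using no_common_hole by blast
  qed
  have "E c w'"
  proof (rule ccontr)
    assume "\<not> E c w'"
    moreover have "c \<noteq> w'" using cw'(4) cw(1) by blast
    ultimately have "w' \<in> hole_nbhd V E c" using hat_cases[OF cw(2) cw'(3)] cw'(4) by auto
    then obtain H where "hole V E H" "c' \<in> H" "c \<in> H"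
      using adjacent_NC_vertices_common_hole[OF g NC(2,1) graph_sym[OF g \<open>E c c'\<close>]
          DiffD1[OF cw'(4)]] cw'(5) \<open>\<not> E c w'\<close> by blast
    then show False using no_common_hole by blast
  qed
  have "w \<noteq> w'" using \<open>E c' w\<close> cw'(5) by blast
  then have "E w w'" using hat_cases[OF cw(3) cw'(3)] cw(4) cw'(4) by blast
  have path: "induced_path E [c', w, w']"
    by (rule induced_path_3[OF g]) (use \<open>E c' w\<close> \<open>E w w'\<close> cw'(1,4,5) \<open>w \<noteq> w'\<close> graph_irrefl[OF g] in blast)+
  have "hole V E (insert c (set [c', w, w']))"
  proof (rule hole_of_induced_path[OF g path])
    show "set [c', w, w'] \<subseteq> V" "c \<in> V"
      using K cw(2,3) cw'(2,3) unfolding clique_def by auto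
    show "c \<notin> set [c', w, w']" using \<open>c \<noteq> c'\<close> cw(1,4) cw'(4) by auto
    show "E c (hd [c', w, w'])" "E c (last [c', w, w'])" using \<open>E c c'\<close> \<open>E c w'\<close> by auto
    show "\<not> E c ([c', w, w'] ! i)" if "0 < i" "i < length [c', w, w'] - 1" for i
      using that cw(5) by (simp add: less_Suc_eq)
  qed simp
  then show False using no_common_hole by auto
qed

theorem theorem2p6:
  fixes V :: "'a set" and E :: "'a \<Rightarrow> 'a \<Rightarrow> bool" and C K :: "'a set" and us :: "'a list"
  assumes "graph V E"
    and "hole_cover V E C"
    and "NC_set V E C"
    and "distinct us" and "set us = C"
    and "K \<subseteq> V"
    and "clique V (hat_edges V E us) K"
    and "\<not> clique V E K"
  shows "\<exists>u\<in>K \<inter> C. clique V E (K - {u})"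
proof -
  have hat: "hat_edges V E us x y" if "x \<in> K" "y \<in> K" "x \<noteq> y" for x y
    using assms(7) that unfolding clique_def by blast
  obtain x y where xy: "x \<in> K" "y \<in> K" "x \<noteq> y" "\<not> E x y"
    using assms(6,8) unfolding clique_def by blast
  obtain c w where cw: "c \<in> C" "{x, y} = {c, w}" "w \<in> hole_nbhd V E c - C" "\<not> E c w"
    using missing_edge_centre[OF assms(1,3,5) hat[OF xy(1-3)] xy(4)] by blast
  have cK: "c \<in> K" "w \<in> K" using cw(2) xy(1,2) by (auto simp: doubleton_eq_iff)
  have "E x' y'" if "x' \<in> K - {c}" "y' \<in> K - {c}" "x' \<noteq> y'" for x' y'
  proof (rule ccontr)
    assume "\<not> E x' y'"
    moreover have "hat_edges V E us x' y'" using hat that by blast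
    ultimately obtain c' w' where cw': "c' \<in> C" "{x', y'} = {c', w'}" "w' \<in> hole_nbhd V E c' - C" "\<not> E c' w'"
      using missing_edge_centre[OF assms(1,3,5)] by metis
    then have "c' \<in> K - {c}" "w' \<in> K" using that by (auto simp: doubleton_eq_iff)
    then show False
      using missing_edges_share_centre[OF assms(1,3,5,7) cw(1) cK cw(3,4) cw'(1) _ _ cw'(3,4)] by blast
  qed
  then show ?thesis using cw(1) cK(1) assms(6) unfolding clique_def by blast
qed

end
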